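(* Let $k\geq2$ and let $L=(l_1,\dots,l_k)$ be generic and reduced positive integers with sum $n$, let $T=Tonn^{n,k}(L)$ with base vertex $v_0$, and let $\widetilde T$ be its simplicial universal cover. Define $\Omega$ on vertices of $\widetilde T$ by $\Omega([\alpha])=\omega(\alpha)=\sum_{e\in\alpha}\omega(e)\in\Lambda$. Then $\Omega$ is a well-defined isomorphism of simplicial complexes $\widetilde T\to\mathcal{D}_\Lambda$.
   Context: The generalized tonnetz $Tonn^{n,k}(L)$ is the simplicial complex on vertex set $\mathbb{Z}_n$ whose maximal simplices are $\Delta(x;\sigma)=\{x,\,x+l_{\sigma(1)},\dots,x+l_{\sigma(1)}+\dots+l_{\sigma(k-1)}\}$ for $x\in\mathbb{Z}_n$, $\sigma\in S_k$. $L$ is generic if for all $I,J\subseteq[k]$, $\sum_{i\in I}l_i=\sum_{j\in J}l_j$ implies $I=J$; reduced if $\gcd(l_1,\dots,l_k)=1$. The vector 1-cocycle $\omega$ assigns to the oriented 1-simplex $(u,v)$ of $L$-type $I$ (the unique nonempty $I\subseteq[k]$ with $v-u\equiv\sum_{j\in I}l_j\pmod n$) the vector $a_I=\sum_{i\in I}a_i$, where $a_i=ke_i-(1,\dots,1)\in\mathbb{Z}^k$; $a_\emptyset=0$. Simplicial universal cover: vertices of $\widetilde T$ are combinatorial homotopy classes (rel end-points) of edge-paths starting at $v_0$; a set of such classes $\{[\alpha_0],\dots,[\alpha_d]\}$ with end-points $x_0,\dots,x_d$ is a simplex iff $\{x_0,\dots,x_d\}$ is a simplex of $T$ and for all $i\neq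 j$ the loop $\alpha_i e\alpha_j^{-1}$ (with $e$ the edge from $x_i$ to $x_j$) is null-homotopic. $\Lambda=\{x\in\mathbb{Z}^k:\sum x_i=0,\text{ all }x_i\text{ congruent mod }k\}$. $\mathcal{D}_\Lambda$ (the Delone triangulation of $H_0=\{x\in\mathbb{R}^k:\sum x_i=0\}$ for $\Lambda$) is the simplicial complex with vertex set $\Lambda$ whose simplices are the sets $\{z+a_{I_1},\dots,z+a_{I_s}\}$ with $z\in\Lambda$ and $I_1\subsetneq I_2\subsetneq\dots\subsetneq I_s\subsetneq[k]$. *)

theory Defs
  imports "HOL-Combinatorics.Permutations"
begin

text \<open>Conventions: the generators are indexed by 0..k-1 (paper: 1..k), given by
  a function l :: nat => int.  Vertices of Z_n are the integers 0..n-1.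
  A simplicial complex is represented by its set of (nonempty, finite) faces.
  Vectors of Z^k are functions nat => int vanishing outside {..<k}.\<close>

definition tonn_max_simplex :: "int \<Rightarrow> nat \<Rightarrow> (nat \<Rightarrow> int) \<Rightarrow> int \<Rightarrow> (nat \<Rightarrow> nat) \<Rightarrow> int set" where
  "tonn_max_simplex n k l x \<sigma> = {(x + (\<Sum>j<i. l (\<sigma> j))) mod n | i. i < k}"

definition tonnetz :: "int \<Rightarrow> nat \<Rightarrow> (nat \<Rightarrow> int) \<Rightarrow> int set set" where
  "tonnetz n k l = {S. S \<noteq> {} \<and> (\<exists>x\<in>{0..<n}. \<exists>\<sigma>. \<sigma> permutes {..<k} \<and> S \<subseteq> tonn_max_simplex n k l x \<sigma>)}"

definition generic :: "nat \<Rightarrow> (nat \<Rightarrow> int) \<Rightarrow> bool" where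
  "generic k l \<longleftrightarrow> (\<forall>I J. I \<subseteq> {..<k} \<longrightarrow> J \<subseteq> {..<k} \<longrightarrow> sum l I = sum l J \<longrightarrow> I = J)"

definition reduced :: "nat \<Rightarrow> (nat \<Rightarrow> int) \<Rightarrow> bool" where
  "reduced k l \<longleftrightarrow> Gcd (l ` {..<k}) = 1"

definition edge_path :: "'v set set \<Rightarrow> 'v list \<Rightarrow> bool" where
  "edge_path F p \<longleftrightarrow> p \<noteq> [] \<and> (\<forall>x\<in>set p. {x} \<in> F) \<and>
     (\<forall>i. Suc i < length p \<longrightarrow> {p ! i, p ! Suc i} \<in> F)"

definition elem_red :: "'v set set \<Rightarrow> ('v list \<times> 'v list) set" where
  "elem_red F = {(xs @ v # ys, xs @ ys) | xs v ys. edge_path F (xs @ v # ys) \<and> xs \<noteq> [] \<and>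
      (v = last xs \<or> (ys \<noteq> [] \<and> {last xs, v, hd ys} \<in> F))}"

definition comb_htp :: "'v set set \<Rightarrow> ('v list \<times> 'v list) set" where
  "comb_htp F = (elem_red F \<union> (elem_red F)\<inverse>)\<^sup>*"

definition htp_class :: "'v set set \<Rightarrow> 'v list \<Rightarrow> 'v list set" where
  "htp_class F p = {q. (p, q) \<in> comb_htp F}"

definition cover_vertices :: "'v set set \<Rightarrow> 'v \<Rightarrow> 'v list set set" where
  "cover_vertices F v0 = {htp_class F p | p. edge_path F p \<and> hd p = v0}"

definition cover_faces :: "'v set set \<Rightarrow> 'v \<Rightarrow> 'v list set set set" where
  "cover_faces F v0 = {S. S \<noteq> {} \<and> finite S \<and> S \<subseteq> cover_vertices F v0 \<and>
      {last \<alpha> | \<alpha>. \<alpha> \<in> \<Union>S} \<in> F \<and>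
      (\<forall>c\<in>S. \<forall>c'\<in>S. \<forall>\<alpha>\<in>c. \<forall>\<beta>\<in>c'. (\<alpha> @ rev \<beta>, [v0]) \<in> comb_htp F)}"

text \<open>a_I = sum_{i in I} (k e_i - (1,...,1)).\<close>
definition avec :: "nat \<Rightarrow> nat set \<Rightarrow> (nat \<Rightarrow> int)" where
  "avec k I = (\<lambda>i. if i < k then (if i \<in> I then int k else 0) - int (card I) else 0)"

definition ltype :: "int \<Rightarrow> nat \<Rightarrow> (nat \<Rightarrow> int) \<Rightarrow> int \<Rightarrow> int \<Rightarrow> nat set" where
  "ltype n k l u v = (THE I. I \<noteq> {} \<and> I \<subseteq> {..<k} \<and> (v - u) mod n = (sum l I) mod n)"

definition omega_edge :: "int \<Rightarrow> nat \<Rightarrow> (nat \<Rightarrow> int) \<Rightarrow> int \<Rightarrow> int \<Rightarrow> (nat \<Rightarrow> int)" where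
  "omega_edge n k l u v = avec k (ltype n k l u v)"

definition omega_path :: "int \<Rightarrow> nat \<Rightarrow> (nat \<Rightarrow> int) \<Rightarrow> int list \<Rightarrow> (nat \<Rightarrow> int)" where
  "omega_path n k l p = (\<lambda>c. \<Sum>i<length p - 1. omega_edge n k l (p ! i) (p ! Suc i) c)"

definition Lambda :: "nat \<Rightarrow> (nat \<Rightarrow> int) set" where
  "Lambda k = {x. (\<forall>i\<ge>k. x i = 0) \<and> (\<Sum>i<k. x i) = 0 \<and>
      (\<forall>i<k. \<forall>j<k. x i mod int k = x j mod int k)}"

definition delone_faces :: "nat \<Rightarrow> (nat \<Rightarrow> int) set set" where
  "delone_faces k = {S. \<exists>z\<in>Lambda k. \<exists>C. finite C \<and> C \<noteq> {} \<and> (\<forall>I\<in>C. I \<subset> {..<k}) \<and>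
      (\<forall>I\<in>C. \<forall>J\<in>C. I \<subseteq> J \<or> J \<subseteq> I) \<and> S = (\<lambda>I. (\<lambda>i. z i + avec k I i)) ` C}"

end

theory Submission
  imports Defs
begin

text \<open>On a maximal simplex \<open>\<Delta>(x;\<sigma>)\<close> the cochain \<open>\<omega>\<close> is the coboundary of the flag
  \<open>j \<mapsto> a\<^bsub>\<sigma>{..<j}\<^esub>\<close>, so it is a cocycle and \<open>\<Omega>\<close> is well defined on homotopy classes.
  Steps of singleton type commute (both orders span a triangle), a round \<open>l\<^sub>0 \<dots> l\<^bsub>k-1\<^esub>\<close> is a
  null-homotopic loop inside one simplex, and an edge of type \<open>I\<close> is homotopic to the steps of
  \<open>I\<close>. Hence every path from \<open>v\<^sub>0\<close> is homotopic to a normal form with \<open>c\<^sub>i\<close> steps of type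
  \<open>{i}\<close> in increasing order, unique up to adding rounds. Its image \<open>k c - |c| (1,\<dots>,1)\<close>
  determines \<open>c\<close> up to such a constant, which gives injectivity of \<open>\<Omega>\<close>, and every point of
  \<open>\<Lambda>\<close> arises this way. A face of the cover lies over one maximal simplex, so its \<open>\<Omega>\<close>-values
  differ by the vectors of one flag, i.e. form a Delone simplex; conversely a chain of subsets
  is part of the flag of one permutation and is realised by paths ending in one simplex.\<close>

section \<open>Edge paths and combinatorial homotopy\<close>

lemma edge_path_singleton: "edge_path F [x] \<longleftrightarrow> {x} \<in> F"
  unfolding edge_path_def by auto

lemma edge_path_nonempty: "edge_path F p \<Longrightarrow> p \<noteq> []"
  by (simp add: edge_path_def)

lemma edge_path_Cons_Cons:
  "edge_path F (x # y # p) \<longleftrightarrow> {x} \<in> F \<and> {x, y} \<in> F \<and> edge_path F (y # p)"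
proof
  assume xyp: "edge_path F (x # y # p)"
  have "{x, y} \<in> F"
    using xyp unfolding edge_path_def by (metis Suc_less_eq length_Cons nth_Cons_0 nth_Cons_Suc zero_less_Suc)
  moreover have "edge_path F (y # p)" unfolding edge_path_def
  proof (intro conjI allI impI)
    fix i assume "Suc i < length (y # p)"
    then have "Suc (Suc i) < length (x # y # p)" by simp
    then have "{(x # y # p) ! Suc i, (x # y # p) ! Suc (Suc i)} \<in> F"
      using xyp unfolding edge_path_def by blast
    then show "{(y # p) ! i, (y # p) ! Suc i} \<in> F" by simp
  qed (use xyp in \<open>auto simp: edge_path_def\<close>)
  ultimately show "{x} \<in> F \<and> {x, y} \<in> F \<and> edge_path F (y # p)"
    using xyp unfolding edge_path_def by auto
next
  assume *: "{x} \<in> F \<and> {x, y} \<in> F \<and> edge_path F (y # p)"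
  show "edge_path F (x # y # p)" unfolding edge_path_def
  proof (intro conjI allI impI)
    fix i assume i: "Suc i < length (x # y # p)"
    show "{(x # y # p) ! i, (x # y # p) ! Suc i} \<in> F"
    proof (cases i)
      case (Suc j)
      then have "Suc j < length (y # p)" using i by simp
      then show ?thesis using * Suc unfolding edge_path_def by simp
    qed (use * in simp)
  qed (use * in \<open>auto simp: edge_path_def\<close>)
qed

lemma edge_path_Cons:
  "p \<noteq> [] \<Longrightarrow> edge_path F (x # p) \<longleftrightarrow> {x} \<in> F \<and> {x, hd p} \<in> F \<and> edge_path F p"
  by (cases p) (auto simp: edge_path_Cons_Cons)

lemma edge_path_append:
  "xs \<noteq> [] \<Longrightarrow> ys \<noteq> [] \<Longrightarrow>
   edge_path F (xs @ ys) \<longleftrightarrow> edge_path F xs \<and> edge_path F ys \<and> {last xs, hd ys} \<in> F"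
proof (induction xs)
  case (Cons a xs)
  show ?case
  proof (cases "xs = []")
    case True
    then show ?thesis using Cons.prems by (auto simp: edge_path_Cons edge_path_singleton)
  next
    case False
    have "edge_path F ((a # xs) @ ys) \<longleftrightarrow> {a} \<in> F \<and> {a, hd xs} \<in> F \<and> edge_path F (xs @ ys)"
      using False by (simp add: edge_path_Cons)
    also have "\<dots> \<longleftrightarrow> edge_path F (a # xs) \<and> edge_path F ys \<and> {last (a # xs), hd ys} \<in> F"
      using Cons False by (auto simp: edge_path_Cons)
    finally show ?thesis .
  qed
qed simp

lemma edge_path_rev: "edge_path F p \<Longrightarrow> edge_path F (rev p)"
proof (induction p)
  case (Cons a p)
  show ?case
  proof (cases "p = []")
    case False
    then have "{a} \<in> F" "{hd p, a} \<in> F" "edge_path F p"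
      using Cons.prems by (auto simp: edge_path_Cons insert_commute)
    then show ?thesis using False Cons.IH
      by (simp add: edge_path_append edge_path_singleton last_rev)
  qed (use Cons in simp)
qed (simp add: edge_path_def)

definition down_closed :: "'v set set \<Rightarrow> bool" where
  "down_closed F \<longleftrightarrow> (\<forall>S\<in>F. \<forall>T. T \<subseteq> S \<longrightarrow> T \<noteq> {} \<longrightarrow> T \<in> F)"

lemma down_closedD: "down_closed F \<Longrightarrow> S \<in> F \<Longrightarrow> T \<subseteq> S \<Longrightarrow> T \<noteq> {} \<Longrightarrow> T \<in> F"
  unfolding down_closed_def by blast

lemma edge_path_in_face:
  "down_closed F \<Longrightarrow> S \<in> F \<Longrightarrow> set p \<subseteq> S \<Longrightarrow> p \<noteq> [] \<Longrightarrow> edge_path F p"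
  unfolding edge_path_def by (auto intro: down_closedD simp: subset_iff)

lemma edge_path_replace:
  assumes "edge_path F (r @ p @ s)" "p \<noteq> []" "edge_path F m" "hd m = hd p" "last m = last p"
  shows "edge_path F (r @ m @ s)"
proof -
  have m: "m \<noteq> []" using assms(3) by (rule edge_path_nonempty)
  have ps: "edge_path F (p @ s)" "r = [] \<or> (edge_path F r \<and> {last r, hd p} \<in> F)"
    using assms(1,2) by (cases "r = []"; auto simp: edge_path_append)+
  have "s = [] \<or> (edge_path F s \<and> {last p, hd s} \<in> F)"
    using ps(1) assms(2) by (cases "s = []"; auto simp: edge_path_append)
  then have "edge_path F (m @ s)"
    using assms m by (cases "s = []"; auto simp: edge_path_append)
  then show ?thesis using ps(2) m assms by (cases "r = []"; auto simp: edge_path_append)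
qed

lemma elem_redI:
  "edge_path F (xs @ v # ys) \<Longrightarrow> xs \<noteq> [] \<Longrightarrow> v = last xs \<or> (ys \<noteq> [] \<and> {last xs, v, hd ys} \<in> F)
   \<Longrightarrow> (xs @ v # ys, xs @ ys) \<in> elem_red F"
  unfolding elem_red_def by blast

lemma elem_red_edge_path:
  assumes "(a, b) \<in> elem_red F" "down_closed F"
  shows "edge_path F a \<and> edge_path F b \<and> hd b = hd a \<and> last b = last a"
proof -
  obtain xs v ys where a: "a = xs @ v # ys" and b: "b = xs @ ys"
    and ep: "edge_path F (xs @ v # ys)" and xs: "xs \<noteq> []"
    and v: "v = last xs \<or> (ys \<noteq> [] \<and> {last xs, v, hd ys} \<in> F)"
    using assms(1) unfolding elem_red_def by blast
  have xs_v: "edge_path F xs" "edge_path F (v # ys)" "{last xs, v} \<in> F"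
    using ep xs by (auto simp: edge_path_append simp del: append_Cons)
  have "edge_path F b"
  proof (cases "ys = []")
    case False
    have "edge_path F ys" "{v, hd ys} \<in> F" using xs_v(2) False by (auto simp: edge_path_Cons)
    moreover have "{last xs, hd ys} \<in> F"
    proof (cases "v = last xs")
      case False
      then have "{last xs, v, hd ys} \<in> F" using v by blast
      then show ?thesis by (rule down_closedD[OF assms(2)]) auto
    qed (use \<open>{v, hd ys} \<in> F\<close> in simp)
    ultimately show ?thesis using b xs_v False xs by (simp add: edge_path_append)
  qed (use b xs_v in simp)
  moreover have "last b = last a" using a b v xs by (cases "ys = []") auto
  ultimately show ?thesis using a b ep xs by simp
qed

lemma elem_red_in_context:
  assumes "(a, b) \<in> elem_red F" "edge_path F (r @ a @ s)"
  shows "(r @ a @ s, r @ b @ s) \<in> elem_red F"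
proof -
  obtain xs v ys where a: "a = xs @ v # ys" and b: "b = xs @ ys" and xs: "xs \<noteq> []"
    and v: "v = last xs \<or> (ys \<noteq> [] \<and> {last xs, v, hd ys} \<in> F)"
    using assms(1) unfolding elem_red_def by blast
  have "r @ a @ s = (r @ xs) @ v # (ys @ s)" "r @ b @ s = (r @ xs) @ (ys @ s)"
    using a b by auto
  moreover have "v = last (r @ xs) \<or> (ys @ s \<noteq> [] \<and> {last (r @ xs), v, hd (ys @ s)} \<in> F)"
    using v xs by auto
  ultimately show ?thesis using assms(2) xs unfolding elem_red_def by fastforce
qed

lemma comb_htp_refl: "(p, p) \<in> comb_htp F"
  unfolding comb_htp_def by simp

lemma comb_htp_trans: "(p, q) \<in> comb_htp F \<Longrightarrow> (q, r) \<in> comb_htp F \<Longrightarrow> (p, r) \<in> comb_htp F"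
  unfolding comb_htp_def by (rule rtrancl_trans)

lemma comb_htp_sym: "(p, q) \<in> comb_htp F \<Longrightarrow> (q, p) \<in> comb_htp F"
proof -
  assume "(p, q) \<in> comb_htp F"
  then have "(q, p) \<in> ((elem_red F \<union> (elem_red F)\<inverse>)\<inverse>)\<^sup>*"
    unfolding comb_htp_def by (rule rtrancl_converseI)
  then show ?thesis unfolding comb_htp_def by (simp add: converse_Un sup_commute)
qed

lemma elem_red_imp_comb_htp: "(p, q) \<in> elem_red F \<Longrightarrow> (p, q) \<in> comb_htp F"
  unfolding comb_htp_def by auto

lemma comb_htp_induct [consumes 1, case_names refl step]:
  assumes "(p, q) \<in> comb_htp F" "P p"
    and "\<And>y z. (y, z) \<in> elem_red F \<or> (z, y) \<in> elem_red F \<Longrightarrow> P y \<Longrightarrow> P z"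
  shows "P q"
  using assms(1) unfolding comb_htp_def
proof (induction rule: rtrancl_induct)
  case (step y z)
  then show ?case using assms(3)[of y z] by blast
qed (rule assms(2))

lemma comb_htp_edge_path:
  assumes "(p, q) \<in> comb_htp F" "down_closed F" "edge_path F p"
  shows "edge_path F q \<and> hd q = hd p \<and> last q = last p"
  using assms(1)
proof (induction rule: comb_htp_induct)
  case (step y z)
  have "hd z = hd y \<and> last z = last y \<and> edge_path F z"
    using step.hyps by (auto dest: elem_red_edge_path[OF _ assms(2)])
  with step.IH show ?case by simp
qed (use assms in simp)

lemma comb_htp_in_context:
  assumes "(p, q) \<in> comb_htp F" "down_closed F" "edge_path F (r @ p @ s)" "p \<noteq> []"
  shows "(r @ p @ s, r @ q @ s) \<in> comb_htp F"
proof -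
  have "edge_path F (p @ s)" using assms(3,4) by (cases "r = []"; auto simp: edge_path_append)
  then have p: "edge_path F p" using assms(4) by (cases "s = []"; auto simp: edge_path_append)
  have "(r @ p @ s, r @ q @ s) \<in> comb_htp F \<and> edge_path F q \<and> hd q = hd p \<and> last q = last p"
    using assms(1)
  proof (induction rule: comb_htp_induct)
    case (step y z)
    from step.IH have y: "(r @ p @ s, r @ y @ s) \<in> comb_htp F" "edge_path F y" "hd y = hd p" "last y = last p"
      by simp_all
    have "hd z = hd y \<and> last z = last y \<and> edge_path F z"
      using step.hyps by (auto dest: elem_red_edge_path[OF _ assms(2)])
    with y have z: "edge_path F z" "hd z = hd p" "last z = last p" by simp_all
    have "edge_path F (r @ y @ s)" "edge_path F (r @ z @ s)"
      using edge_path_replace[OF assms(3,4)] y z by blast+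
    then have "(r @ y @ s, r @ z @ s) \<in> comb_htp F"
      using step.hyps elem_red_in_context[of y z F r s] elem_red_in_context[of z y F r s]
        elem_red_imp_comb_htp comb_htp_sym by blast
    then show ?case using y(1) z comb_htp_trans by blast
  qed (use p comb_htp_refl in simp)
  then show ?thesis by simp
qed

text \<open>Any two paths with the same end-points inside a single face are homotopic: the interior
  vertices can be deleted one by one, since every three of them span a face.\<close>

lemma face_path_comb_htp_edge:
  assumes "down_closed F" "S \<in> F"
  shows "set (u # v # rest) \<subseteq> S \<Longrightarrow> (u # v # rest, [u, last (v # rest)]) \<in> comb_htp F"
proof (induction rest arbitrary: v)
  case (Cons w rest)
  have "edge_path F (u # v # w # rest)" using edge_path_in_face[OF assms] Cons.prems by blast
  moreover have "{u, v, w} \<in> F" using down_closedD[OF assms] Cons.prems by auto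
  ultimately have "([u] @ v # (w # rest), [u] @ (w # rest)) \<in> elem_red F"
    by (intro elem_redI) auto
  then have "(u # v # w # rest, u # w # rest) \<in> comb_htp F" by (simp add: elem_red_imp_comb_htp)
  moreover have "(u # w # rest, [u, last (w # rest)]) \<in> comb_htp F" using Cons by auto
  ultimately show ?case using comb_htp_trans by (metis last_ConsR list.distinct(1))
qed (simp add: comb_htp_refl)

lemma face_paths_comb_htp:
  assumes "down_closed F" "S1 \<in> F" "set p \<subseteq> S1" "2 \<le> length p"
    "S2 \<in> F" "set q \<subseteq> S2" "2 \<le> length q" "hd p = hd q" "last p = last q"
  shows "(p, q) \<in> comb_htp F"
proof -
  have "(xs, [hd xs, last xs]) \<in> comb_htp F"
    if S: "S \<in> F" "set xs \<subseteq> S" and len: "2 \<le> length xs" for S xs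
  proof -
    obtain u v rest where "xs = u # v # rest" using len by (cases xs; cases "tl xs") auto
    then show ?thesis using face_path_comb_htp_edge[OF assms(1) S(1), of u v rest] S(2) by simp
  qed
  then have "(p, [hd p, last p]) \<in> comb_htp F" "([hd q, last q], q) \<in> comb_htp F"
    using assms comb_htp_sym by blast+
  then show ?thesis using assms(8,9) comb_htp_trans by metis
qed

lemma comb_htp_stutter: "{u} \<in> F \<Longrightarrow> ([u, u], [u]) \<in> comb_htp F"
proof -
  assume "{u} \<in> F"
  then have "([u] @ u # [], [u] @ []) \<in> elem_red F"
    by (intro elem_redI) (auto simp: edge_path_Cons_Cons edge_path_singleton)
  then show ?thesis by (simp add: elem_red_imp_comb_htp)
qed

section \<open>The vectors \<open>a\<^sub>I\<close> and the lattice \<open>\<Lambda>\<close>\<close>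

lemma avec_empty: "avec k {} i = 0"
  by (simp add: avec_def)

lemma avec_lessThan: "avec k {..<k} i = 0"
  unfolding avec_def by auto

lemma avec_Un:
  "finite X \<Longrightarrow> finite Y \<Longrightarrow> X \<inter> Y = {} \<Longrightarrow> avec k (X \<union> Y) i = avec k X i + avec k Y i"
  unfolding avec_def by (auto simp: card_Un_disjoint)

lemma avec_eq_sum_singletons: "finite I \<Longrightarrow> avec k I i = (\<Sum>j\<in>I. avec k {j} i)"
proof (induction I rule: finite_induct)
  case (insert x I)
  have "avec k (insert x I) i = avec k {x} i + avec k I i"
    using insert avec_Un[of "{x}" I k i] by simp
  then show ?case using insert by simp
qed (simp add: avec_empty)

lemma avec_mod: "i < k \<Longrightarrow> avec k I i mod int k = (- int (card I)) mod int k"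
proof -
  assume "i < k"
  then have "avec k I i = (if i \<in> I then int k else 0) + (- int (card I))"
    unfolding avec_def by simp
  then show ?thesis by (cases "i \<in> I") (simp_all add: mod_add_self1)
qed

lemma avec_in_Lambda:
  assumes "I \<subseteq> {..<k}"
  shows "avec k I \<in> Lambda k"
proof -
  have "(\<Sum>i<k. avec k I i) = (\<Sum>i<k. if i \<in> I then int k else 0) - (\<Sum>i<k. int (card I))"
    unfolding avec_def by (simp add: sum_subtractf)
  also have "(\<Sum>i<k. if i \<in> I then int k else 0) = int k * int (card I)"
    using assms by (simp add: sum.If_cases Int_absorb1)
  finally have "(\<Sum>i<k. avec k I i) = 0" by simp
  moreover have "\<forall>i<k. \<forall>j<k. avec k I i mod int k = avec k I j mod int k"
    by (metis avec_mod)
  moreover have "\<forall>i\<ge>k. avec k I i = 0"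
    unfolding avec_def by simp
  ultimately show ?thesis unfolding Lambda_def by blast
qed

lemma Lambda_diff:
  assumes "x \<in> Lambda k" "y \<in> Lambda k"
  shows "(\<lambda>i. x i - y i) \<in> Lambda k"
proof -
  have "(x i - y i) mod int k = (x j - y j) mod int k" if "i < k" "j < k" for i j
  proof -
    have "x i mod int k = x j mod int k" "y i mod int k = y j mod int k"
      using assms that unfolding Lambda_def by blast+
    then show ?thesis by (metis mod_diff_eq)
  qed
  moreover have "(\<Sum>i<k. x i - y i) = 0" "\<forall>i\<ge>k. x i - y i = 0"
    using assms unfolding Lambda_def by (simp_all add: sum_subtractf)
  ultimately show ?thesis unfolding Lambda_def by blast
qed

text \<open>The image of a path with \<open>c i\<close> steps of type \<open>{i}\<close>: \<open>\<Sum>\<^sub>i c i \<cdot> a\<^bsub>{i}\<^esub> = k c - |c| (1,\<dots>,1)\<close>.\<close>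

definition count_vec :: "nat \<Rightarrow> (nat \<Rightarrow> nat) \<Rightarrow> nat \<Rightarrow> int" where
  "count_vec k c j = (if j < k then int k * int (c j) - (\<Sum>i<k. int (c i)) else 0)"

lemma sum_avec_singletons_eq_count_vec: "(\<Sum>i<k. int (c i) * avec k {i} j) = count_vec k c j"
proof (cases "j < k")
  case True
  have "(\<Sum>i<k. int (c i) * avec k {i} j) = (\<Sum>i<k. (if i = j then int k * int (c i) else 0) - int (c i))"
    using True by (intro sum.cong) (auto simp: avec_def algebra_simps)
  also have "\<dots> = count_vec k c j"
    using True by (simp add: sum_subtractf count_vec_def)
  finally show ?thesis .
qed (simp add: count_vec_def avec_def)

lemma count_vec_in_Lambda: "count_vec k c \<in> Lambda k"
proof -
  have "(\<Sum>j<k. count_vec k c j) = (\<Sum>j<k. int k * int (c j)) - (\<Sum>j<k. \<Sum>i<k. int (c i))"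
    unfolding count_vec_def by (simp add: sum_subtractf)
  also have "\<dots> = 0" by (simp add: sum_distrib_left)
  finally have "(\<Sum>j<k. count_vec k c j) = 0" .
  moreover have "count_vec k c j mod int k = (- (\<Sum>i<k. int (c i))) mod int k" if "j < k" for j
  proof -
    have "count_vec k c j = int k * int (c j) + (- (\<Sum>i<k. int (c i)))"
      using that by (simp add: count_vec_def)
    then show ?thesis by (metis mod_mult_self4)
  qed
  moreover have "\<forall>j\<ge>k. count_vec k c j = 0"
    by (simp add: count_vec_def)
  ultimately show ?thesis unfolding Lambda_def by auto
qed

text \<open>Conversely every \<open>x \<in> \<Lambda>\<close> is a \<open>count_vec\<close>: take \<open>c i = (x i - min x) / k\<close>.\<close>

lemma count_vec_surj:
  assumes "0 < k" "x \<in> Lambda k"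
  shows "\<exists>c. count_vec k c = x"
proof -
  define \<mu> where "\<mu> = Min (x ` {..<k})"
  have \<mu>: "\<mu> \<le> x i" if "i < k" for i
    unfolding \<mu>_def using that by auto
  obtain m where m: "m < k" "x m = \<mu>"
    unfolding \<mu>_def using assms(1)
    by (metis (no_types, lifting) Min_in empty_iff finite_imageI finite_lessThan image_iff lessThan_iff)
  have dvd: "int k dvd x i - \<mu>" if "i < k" for i
  proof -
    have "x i mod int k = x m mod int k" using assms(2) that m(1) unfolding Lambda_def by blast
    then show ?thesis using m(2) by (simp add: mod_eq_dvd_iff)
  qed
  define c where "c = (\<lambda>i. nat ((x i - \<mu>) div int k))"
  have c: "int k * int (c i) = x i - \<mu>" if "i < k" for i
  proof -
    have "0 \<le> (x i - \<mu>) div int k" using \<mu>[OF that] assms(1) by (simp add: div_int_pos_iff)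
    then show ?thesis using dvd[OF that] by (simp add: c_def dvd_mult_div_cancel)
  qed
  have "int k * (\<Sum>i<k. int (c i)) = (\<Sum>i<k. x i - \<mu>)"
    by (simp add: sum_distrib_left c)
  also have "\<dots> = int k * (- \<mu>)"
  proof -
    have "(\<Sum>i<k. x i) = 0" using assms(2) unfolding Lambda_def by blast
    then show ?thesis by (simp add: sum_subtractf)
  qed
  finally have "int k * ((\<Sum>i<k. int (c i)) + \<mu>) = 0" by (simp add: algebra_simps)
  then have sum_c: "(\<Sum>i<k. int (c i)) = - \<mu>" using assms(1) by simp
  have "count_vec k c j = x j" for j
  proof (cases "j < k")
    case True
    then show ?thesis using c sum_c by (simp add: count_vec_def)
  next
    case False
    then show ?thesis using assms(2) by (simp add: count_vec_def Lambda_def)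
  qed
  then show ?thesis by blast
qed

lemma count_vec_eq_imp_shift:
  assumes "0 < k" "count_vec k c = count_vec k d"
  obtains m where "\<forall>t<k. c t = d t + m" | m where "\<forall>t<k. d t = c t + m"
proof -
  define \<delta> where "\<delta> = int (c 0) - int (d 0)"
  have diff: "int (c t) - int (d t) = \<delta>" if "t < k" for t
  proof -
    have "int k * int (c t) - (\<Sum>i<k. int (c i)) = int k * int (d t) - (\<Sum>i<k. int (d i))"
      "int k * int (c 0) - (\<Sum>i<k. int (c i)) = int k * int (d 0) - (\<Sum>i<k. int (d i))"
      using fun_cong[OF assms(2), of t] fun_cong[OF assms(2), of 0] that assms(1)
      by (simp_all add: count_vec_def)
    then have "int k * (int (c t) - int (d t)) = int k * \<delta>"
      unfolding \<delta>_def by (simp add: algebra_simps)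
    then show ?thesis using assms(1) by simp
  qed
  show ?thesis
  proof (cases "0 \<le> \<delta>")
    case True
    then have "\<forall>t<k. c t = d t + nat \<delta>" using diff by force
    then show ?thesis by (rule that(1))
  next
    case False
    then have "\<forall>t<k. d t = c t + nat (- \<delta>)" using diff by force
    then show ?thesis by (rule that(2))
  qed
qed

section \<open>Words and walks\<close>

definition count_word :: "nat \<Rightarrow> (nat \<Rightarrow> nat) \<Rightarrow> nat list" where
  "count_word k c = concat (map (\<lambda>i. replicate (c i) i) [0..<k])"

lemma set_count_word: "set (count_word k c) \<subseteq> {..<k}"
  unfolding count_word_def by auto

lemma count_word_cong: "(\<And>t. t < k \<Longrightarrow> c t = d t) \<Longrightarrow> count_word k c = count_word k d"
  unfolding count_word_def by (intro arg_cong[where f = concat] map_cong) auto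

lemma count_word_zero: "count_word k (\<lambda>_. 0) = []"
  unfolding count_word_def by (induction k) auto

lemma sum_list_concat: "sum_list (concat xss) = sum_list (map sum_list xss)"
  by (induction xss) auto

lemma sum_list_map_count_word:
  "sum_list (map f (count_word k c)) = (\<Sum>i<k. int (c i) * (f i :: int))"
proof -
  have "sum_list (map f (count_word k c)) = sum_list (map (\<lambda>i. int (c i) * f i) [0..<k])"
    unfolding count_word_def by (simp add: map_concat sum_list_concat comp_def sum_list_replicate)
  then show ?thesis by (simp add: interv_sum_list_conv_sum_set_nat atLeast0LessThan)
qed

lemma count_list_distinct: "distinct xs \<Longrightarrow> count_list xs x = (if x \<in> set xs then 1 else 0)"
  by (induction xs) auto

fun walk :: "int \<Rightarrow> (nat \<Rightarrow> int) \<Rightarrow> int \<Rightarrow> nat list \<Rightarrow> int list" where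
  "walk n l y [] = [y]"
| "walk n l y (i # w) = y # walk n l ((y + l i) mod n) w"

fun walk_end :: "int \<Rightarrow> (nat \<Rightarrow> int) \<Rightarrow> int \<Rightarrow> nat list \<Rightarrow> int" where
  "walk_end n l y [] = y"
| "walk_end n l y (i # w) = walk_end n l ((y + l i) mod n) w"

lemma walk_nonempty: "walk n l y w \<noteq> []"
  by (cases w) auto

lemma hd_walk: "hd (walk n l y w) = y"
  by (cases w) auto

lemma last_walk: "last (walk n l y w) = walk_end n l y w"
  by (induction w arbitrary: y) (auto simp: walk_nonempty)

lemma length_walk: "length (walk n l y w) = Suc (length w)"
  by (induction w arbitrary: y) auto

lemma walk_end_append: "walk_end n l y (u @ w) = walk_end n l (walk_end n l y u) w"
  by (induction u arbitrary: y) auto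

lemma walk_append: "walk n l y (u @ w) = walk n l y u @ tl (walk n l (walk_end n l y u) w)"
proof (induction u arbitrary: y)
  case Nil
  then show ?case by (cases w) auto
qed simp

lemma walk_append_butlast:
  "walk n l y (u @ w) = butlast (walk n l y u) @ walk n l (walk_end n l y u) w"
proof -
  have "walk n l y u = butlast (walk n l y u) @ [walk_end n l y u]"
    using last_walk[of n l y u] walk_nonempty[of n l y u] by (metis append_butlast_last_id)
  moreover have "walk n l (walk_end n l y u) w = walk_end n l y u # tl (walk n l (walk_end n l y u) w)"
    using hd_walk walk_nonempty by (metis list.collapse)
  ultimately show ?thesis using walk_append[of n l y u w] by (metis append.assoc append_Cons append_Nil)
qed

lemma walk_mem_walk_end_take:
  "x \<in> set (walk n l y w) \<Longrightarrow> \<exists>t\<le>length w. x = walk_end n l y (take t w)"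
proof (induction w arbitrary: y)
  case (Cons i w)
  show ?case
  proof (cases "x = y")
    case True then show ?thesis by (intro exI[of _ 0]) simp
  next
    case False
    then obtain t where "t \<le> length w" "x = walk_end n l ((y + l i) mod n) (take t w)"
      using Cons by auto
    then show ?thesis by (intro exI[of _ "Suc t"]) simp
  qed
qed simp

lemma sum_list_map_take: "t \<le> length w \<Longrightarrow> sum_list (map l (take t w)) = (\<Sum>j<t. l (w ! j))"
  by (induction t) (simp_all add: take_Suc_conv_app_nth)

section \<open>Flags of permutations\<close>

lemma permutes_extending_list:
  assumes "distinct w" "set w \<subseteq> {..<k}"
  shows "\<exists>\<sigma>. \<sigma> permutes {..<k} \<and> (\<forall>j<length w. \<sigma> j = w ! j)"
proof -
  define ws where "ws = w @ sorted_list_of_set ({..<k} - set w)"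
  have ws: "distinct ws" "set ws = {..<k}" using assms by (auto simp: ws_def)
  then have len: "length ws = k" using distinct_card[OF ws(1)] by simp
  define \<sigma> where "\<sigma> = (\<lambda>j. if j < k then ws ! j else j)"
  have "bij_betw ((!) ws) {..<k} {..<k}" using bij_betw_nth[OF ws(1)] len ws(2) by simp
  then have "bij_betw \<sigma> {..<k} {..<k}" by (rule bij_betw_cong[THEN iffD1, rotated]) (simp add: \<sigma>_def)
  then have "\<sigma> permutes {..<k}" by (rule bij_imp_permutes) (simp add: \<sigma>_def)
  moreover have "\<forall>j<length w. \<sigma> j = w ! j"
    using len by (auto simp: \<sigma>_def ws_def nth_append)
  ultimately show ?thesis by blast
qed

lemma take_length_filter_sorted:
  "sorted (map f xs) \<Longrightarrow> take (length (filter (\<lambda>x. f x \<le> (r::nat)) xs)) xs = filter (\<lambda>x. f x \<le> r) xs"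
proof (induction xs)
  case (Cons a xs)
  have sorted: "sorted (map f xs)" "\<forall>y\<in>set xs. f a \<le> f y" using Cons.prems by auto
  show ?case
  proof (cases "f a \<le> r")
    case False
    then have "filter (\<lambda>x. f x \<le> r) xs = []" using sorted(2) by (auto simp: filter_empty_conv)
    then show ?thesis using False by simp
  qed (use Cons.IH sorted in simp)
qed simp

text \<open>A chain of subsets of \<open>{..<k}\<close> is a set of initial segments \<open>\<sigma> ` {..<j}\<close> of one permutation:
  list the elements by the size of the smallest member of the chain containing them.\<close>

lemma chain_permutes_initial_segments:
  assumes "finite C" "\<forall>I\<in>C. I \<subseteq> {..<k}" "\<forall>I\<in>C. \<forall>J\<in>C. I \<subseteq> J \<or> J \<subseteq> I"
  shows "\<exists>\<sigma>. \<sigma> permutes {..<k} \<and> (\<forall>I\<in>C. \<sigma> ` {..<card I} = I)"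
proof -
  define C' where "C' = insert {..<k} C"
  have C': "finite C'" "\<forall>I\<in>C'. I \<subseteq> {..<k}" "\<forall>I\<in>C'. \<forall>J\<in>C'. I \<subseteq> J \<or> J \<subseteq> I"
    using assms by (auto simp: C'_def)
  define rank where "rank i = Min (card ` {J\<in>C'. i \<in> J})" for i
  have rank: "{i \<in> {..<k}. rank i \<le> card I} = I" if I: "I \<in> C'" for I
  proof
    show "I \<subseteq> {i \<in> {..<k}. rank i \<le> card I}"
      unfolding rank_def using C' I by (auto intro!: Min_le)
  next
    show "{i \<in> {..<k}. rank i \<le> card I} \<subseteq> I"
    proof
      fix i assume i: "i \<in> {i \<in> {..<k}. rank i \<le> card I}"
      have "rank i \<in> card ` {J\<in>C'. i \<in> J}"
        unfolding rank_def using C'(1) i by (intro Min_in) (auto simp: C'_def)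
      then obtain J where J: "J \<in> C'" "i \<in> J" "rank i = card J" by auto
      show "i \<in> I"
      proof (rule ccontr)
        assume "i \<notin> I"
        then have "I \<subset> J" using C'(3) I J by blast
        moreover have "finite J" using C'(2) J(1) finite_subset by blast
        ultimately have "card I < card J" by (rule psubset_card_mono[rotated])
        then show False using i J(3) by simp
      qed
    qed
  qed
  define ws where "ws = sort_key rank [0..<k]"
  have ws: "distinct ws" "set ws = {..<k}" "sorted (map rank ws)" "length ws = k"
    by (auto simp: ws_def distinct_sort atLeast0LessThan)
  obtain \<sigma> where \<sigma>: "\<sigma> permutes {..<k}" "\<forall>j<length ws. \<sigma> j = ws ! j"
    using permutes_extending_list[OF ws(1)] ws(2) by blast
  have "\<sigma> ` {..<card I} = I" if I: "I \<in> C" for I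
  proof -
    let ?P = "\<lambda>x. rank x \<le> card I"
    have I': "I \<in> C'" using I by (simp add: C'_def)
    have filter: "set (filter ?P ws) = I" using rank[OF I'] ws(2) by auto
    then have "length (filter ?P ws) = card I"
      using distinct_card[of "filter ?P ws"] ws(1) by simp
    then have take: "take (card I) ws = filter ?P ws"
      using take_length_filter_sorted[OF ws(3)] by metis
    have "card I \<le> k" using C'(2) I' card_mono[of "{..<k}" I] by auto
    then have "\<sigma> ` {..<card I} = set (take (card I) ws)"
      using \<sigma>(2) ws(4) nth_image[of "card I" ws] by (auto simp: atLeast0LessThan image_iff)
    then show ?thesis using take filter by simp
  qed
  then show ?thesis using \<sigma>(1) by blast
qed

text \<open>The vertices of \<open>\<Delta>(x;\<sigma>)\<close> are \<open>x + flag_sum l \<sigma> a\<close> for \<open>a < k\<close>, and the edge from the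
  \<open>a\<close>-th to the \<open>b\<close>-th one has \<open>L\<close>-type \<open>flag_arc k \<sigma> a b\<close>, a cyclic interval of \<open>\<sigma>\<close>.\<close>

definition flag_sum :: "(nat \<Rightarrow> int) \<Rightarrow> (nat \<Rightarrow> nat) \<Rightarrow> nat \<Rightarrow> int" where
  "flag_sum l \<sigma> t = (\<Sum>j<t. l (\<sigma> j))"

definition flag_arc :: "nat \<Rightarrow> (nat \<Rightarrow> nat) \<Rightarrow> nat \<Rightarrow> nat \<Rightarrow> nat set" where
  "flag_arc k \<sigma> a b = \<sigma> ` (if a < b then {a..<b} else {a..<k} \<union> {..<b})"

lemma sum_image_permutes:
  "\<sigma> permutes A \<Longrightarrow> B \<subseteq> A \<Longrightarrow> sum l (\<sigma> ` B) = (\<Sum>j\<in>B. l (\<sigma> j))"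
  by (subst sum.reindex) (auto intro: inj_on_subset[OF permutes_inj_on])

lemma flag_sum_eq_sum_image:
  "\<sigma> permutes {..<k} \<Longrightarrow> t \<le> k \<Longrightarrow> flag_sum l \<sigma> t = sum l (\<sigma> ` {..<t})"
  unfolding flag_sum_def by (simp add: sum_image_permutes)

lemma flag_arc_nonempty: "a < k \<Longrightarrow> b < k \<Longrightarrow> flag_arc k \<sigma> a b \<noteq> {}"
  unfolding flag_arc_def by auto

lemma flag_arc_subset: "\<sigma> permutes {..<k} \<Longrightarrow> b < k \<Longrightarrow> flag_arc k \<sigma> a b \<subseteq> {..<k}"
  unfolding flag_arc_def using permutes_image[of \<sigma> "{..<k}"] by auto

lemma additive_flag_arc:
  fixes f :: "nat set \<Rightarrow> int"
  assumes f: "\<And>X Y. X \<subseteq> {..<k} \<Longrightarrow> Y \<subseteq> {..<k} \<Longrightarrow> X \<inter> Y = {} \<Longrightarrow> f (X \<union> Y) = f X + f Y"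
    and \<sigma>: "\<sigma> permutes {..<k}" and "a < k" "b < k"
  shows "f (flag_arc k \<sigma> a b) = f (\<sigma> ` {..<b}) - f (\<sigma> ` {..<a}) + (if a < b then 0 else f {..<k})"
proof -
  have sub: "\<sigma> ` X \<subseteq> {..<k}" if "X \<subseteq> {..<k}" for X
    using that permutes_image[OF \<sigma>] by auto
  have disj: "\<sigma> ` X \<inter> \<sigma> ` Y = {}" if "X \<inter> Y = {}" for X Y
    using that image_Int[OF permutes_inj[OF \<sigma>], of X Y] by simp
  show ?thesis
  proof (cases "a < b")
    case True
    have "\<sigma> ` {..<b} = \<sigma> ` {..<a} \<union> \<sigma> ` {a..<b}"
      using True by (metis image_Un ivl_disj_un_one(2) less_imp_le_nat)
    then have "f (\<sigma> ` {..<b}) = f (\<sigma> ` {..<a}) + f (\<sigma> ` {a..<b})"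
      using \<open>b < k\<close> True by (auto intro!: f sub disj)
    then show ?thesis using True by (simp add: flag_arc_def)
  next
    case False
    have "{..<k} = \<sigma> ` {..<a} \<union> \<sigma> ` {a..<k}"
      using \<open>a < k\<close> permutes_image[OF \<sigma>] by (metis image_Un ivl_disj_un_one(2) less_imp_le_nat)
    moreover have "f (\<sigma> ` {..<a} \<union> \<sigma> ` {a..<k}) = f (\<sigma> ` {..<a}) + f (\<sigma> ` {a..<k})"
      using \<open>a < k\<close> by (intro f sub disj) auto
    ultimately have "f {..<k} = f (\<sigma> ` {..<a}) + f (\<sigma> ` {a..<k})" by simp
    moreover have "f (flag_arc k \<sigma> a b) = f (\<sigma> ` {a..<k}) + f (\<sigma> ` {..<b})"
      using False \<open>b < k\<close> unfolding flag_arc_def by (simp add: image_Un) (intro f sub disj; auto)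
    ultimately show ?thesis using False by simp
  qed
qed

lemma avec_flag_arc:
  assumes "\<sigma> permutes {..<k}" "a < k" "b < k"
  shows "avec k (flag_arc k \<sigma> a b) i = avec k (\<sigma> ` {..<b}) i - avec k (\<sigma> ` {..<a}) i"
  using additive_flag_arc[OF _ assms, of "\<lambda>X. avec k X i"]
  by (simp add: avec_Un avec_lessThan finite_subset)

section \<open>The Tonnetz and the cocycle \<open>\<omega>\<close>\<close>

lemma omega_path_singleton: "omega_path n k l [x] i = 0"
  unfolding omega_path_def by simp

lemma omega_path_Cons_Cons:
  "omega_path n k l (x # y # p) i = omega_edge n k l x y i + omega_path n k l (y # p) i"
  unfolding omega_path_def by (simp add: sum.lessThan_Suc_shift del: sum.lessThan_Suc)

lemma omega_path_append:
  "p \<noteq> [] \<Longrightarrow> q \<noteq> [] \<Longrightarrow> omega_path n k l (p @ q) i =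
     omega_path n k l p i + omega_edge n k l (last p) (hd q) i + omega_path n k l q i"
proof (induction p)
  case (Cons a p)
  show ?case
  proof (cases "p = []")
    case True
    then show ?thesis using Cons.prems
      by (cases q) (simp_all add: omega_path_Cons_Cons omega_path_singleton)
  next
    case False
    then show ?thesis using Cons by (auto simp: neq_Nil_conv omega_path_Cons_Cons)
  qed
qed simp

locale tonnetz_setting =
  fixes k :: nat and l :: "nat \<Rightarrow> int" and n :: int
  assumes two_le_k: "2 \<le> k" and l_pos: "\<forall>i<k. 0 < l i" and generic: "generic k l"
    and n_eq: "n = (\<Sum>i<k. l i)"
begin

abbreviation "T \<equiv> tonnetz n k l"
abbreviation "htp \<equiv> comb_htp T"

lemma sum_l_bounds:
  assumes "I \<subseteq> {..<k}" "I \<noteq> {}"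
  shows "0 < sum l I" "sum l I \<le> n"
proof -
  have fin: "finite I" using assms finite_subset by blast
  obtain i where i: "i \<in> I" using assms by blast
  have nonneg: "\<forall>j\<in>{..<k}. 0 \<le> l j" using l_pos by auto
  have "l i \<le> sum l I" using i fin nonneg assms by (intro member_le_sum) auto
  then show "0 < sum l I" using l_pos i assms by force
  show "sum l I \<le> n" unfolding n_eq using nonneg assms by (intro sum_mono2) auto
qed

lemma lessThan_k_nonempty: "{..<k} \<noteq> {}"
  using two_le_k by (simp add: lessThan_empty_iff)

lemma n_pos: "0 < n"
  using sum_l_bounds(1)[OF _ lessThan_k_nonempty] n_eq by simp

text \<open>Genericity makes the \<open>L\<close>-type unique: two sums of distinct subsets lie in \<open>(0, n]\<close>, so
  they cannot be congruent mod \<open>n\<close>.\<close>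

lemma ltype_eqI:
  assumes "I \<noteq> {}" "I \<subseteq> {..<k}" "(v - u) mod n = sum l I mod n"
  shows "ltype n k l u v = I"
  unfolding ltype_def
proof (rule the_equality)
  fix J assume J: "J \<noteq> {} \<and> J \<subseteq> {..<k} \<and> (v - u) mod n = sum l J mod n"
  then have "sum l J mod n = sum l I mod n" using assms(3) by simp
  then have "n dvd sum l J - sum l I" by (simp add: mod_eq_dvd_iff)
  then obtain t where t: "sum l J - sum l I = n * t" by blast
  have "\<bar>sum l J - sum l I\<bar> < n"
    using sum_l_bounds[OF assms(2,1)] sum_l_bounds[of J] J by auto
  then have "\<bar>n * t\<bar> < n" using t by simp
  then have "t = 0" using n_pos by (auto simp: abs_mult)
  then have "sum l J = sum l I" using t by simp
  then show "J = I" using generic J assms(2) unfolding generic_def by blast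
qed (use assms in blast)

lemma ltype_self: "ltype n k l u u = {..<k}"
  by (rule ltype_eqI[OF lessThan_k_nonempty]) (simp_all add: n_eq)

lemma omega_edge_self: "omega_edge n k l u u i = 0"
  unfolding omega_edge_def ltype_self by (rule avec_lessThan)

lemma down_closed_tonnetz: "down_closed T"
  unfolding down_closed_def tonnetz_def by blast

lemma flag_sum_k: "\<sigma> permutes {..<k} \<Longrightarrow> flag_sum l \<sigma> k = n"
  unfolding flag_sum_def n_eq using sum.permute[of \<sigma> "{..<k}" l] by (simp add: comp_def)

lemma flag_vertex_in_max_simplex:
  assumes "\<sigma> permutes {..<k}" "t \<le> k"
  shows "(x + flag_sum l \<sigma> t) mod n \<in> tonn_max_simplex n k l x \<sigma>"
proof (cases "t < k")
  case True
  then show ?thesis unfolding tonn_max_simplex_def flag_sum_def by blast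
next
  case False
  then have "(x + flag_sum l \<sigma> t) mod n = (x + flag_sum l \<sigma> 0) mod n"
    using assms flag_sum_k by (simp add: flag_sum_def)
  then show ?thesis
    unfolding tonn_max_simplex_def flag_sum_def using two_le_k by (auto intro!: exI[of _ 0])
qed

lemma subset_max_simplex_in_tonnetz:
  "x \<in> {0..<n} \<Longrightarrow> \<sigma> permutes {..<k} \<Longrightarrow> S \<subseteq> tonn_max_simplex n k l x \<sigma> \<Longrightarrow> S \<noteq> {} \<Longrightarrow> S \<in> T"
  unfolding tonnetz_def by blast

lemma tonnetz_face_in_flag:
  assumes "S \<in> T"
  obtains x \<sigma> where "x \<in> {0..<n}" "\<sigma> permutes {..<k}" "\<forall>u\<in>S. \<exists>a<k. u = (x + flag_sum l \<sigma> a) mod n"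
  using assms unfolding tonnetz_def tonn_max_simplex_def flag_sum_def by blast

lemma singleton_in_tonnetz_iff: "{x} \<in> T \<longleftrightarrow> x \<in> {0..<n}"
proof
  assume "{x} \<in> T"
  then show "x \<in> {0..<n}"
    unfolding tonnetz_def tonn_max_simplex_def using n_pos by auto
next
  assume x: "x \<in> {0..<n}"
  have "x \<in> tonn_max_simplex n k l x id"
    unfolding tonn_max_simplex_def using x two_le_k by (auto intro!: exI[of _ 0])
  then show "{x} \<in> T" using x permutes_id by (intro subset_max_simplex_in_tonnetz) auto
qed

lemma edge_path_range: "edge_path T p \<Longrightarrow> set p \<subseteq> {0..<n}"
  unfolding edge_path_def using singleton_in_tonnetz_iff by blast

lemma hd_edge_path_range: "edge_path T p \<Longrightarrow> hd p \<in> {0..<n}"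
  using edge_path_range edge_path_nonempty hd_in_set by blast

lemma flag_vertices_diff_mod:
  assumes "\<sigma> permutes {..<k}" "a < k" "b < k"
  shows "((x + flag_sum l \<sigma> b) mod n - (x + flag_sum l \<sigma> a) mod n) mod n = sum l (flag_arc k \<sigma> a b) mod n"
proof -
  have "sum l (flag_arc k \<sigma> a b) = flag_sum l \<sigma> b - flag_sum l \<sigma> a + (if a < b then 0 else n)"
    using additive_flag_arc[of k "sum l", OF _ assms] assms
    by (simp add: sum.union_disjoint finite_subset flag_sum_eq_sum_image n_eq)
  then show ?thesis by (simp add: mod_diff_eq)
qed

lemma flag_vertices_ltype:
  assumes "\<sigma> permutes {..<k}" "a < k" "b < k"
  shows "ltype n k l ((x + flag_sum l \<sigma> a) mod n) ((x + flag_sum l \<sigma> b) mod n) = flag_arc k \<sigma> a b"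
  using assms flag_arc_nonempty flag_arc_subset flag_vertices_diff_mod by (intro ltype_eqI) auto

lemma flag_vertices_omega_edge:
  assumes "\<sigma> permutes {..<k}" "a < k" "b < k"
  shows "omega_edge n k l ((x + flag_sum l \<sigma> a) mod n) ((x + flag_sum l \<sigma> b) mod n) i =
    avec k (\<sigma> ` {..<b}) i - avec k (\<sigma> ` {..<a}) i"
  unfolding omega_edge_def flag_vertices_ltype[OF assms] by (rule avec_flag_arc[OF assms])

lemma omega_edge_cocycle:
  assumes "{u, v, w} \<in> T"
  shows "omega_edge n k l u v i + omega_edge n k l v w i = omega_edge n k l u w i"
proof -
  obtain x \<sigma> where \<sigma>: "\<sigma> permutes {..<k}" and "\<forall>y\<in>{u, v, w}. \<exists>a<k. y = (x + flag_sum l \<sigma> a) mod n"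
    using tonnetz_face_in_flag[OF assms] by blast
  then obtain a b c where "a < k" "b < k" "c < k" "u = (x + flag_sum l \<sigma> a) mod n"
    "v = (x + flag_sum l \<sigma> b) mod n" "w = (x + flag_sum l \<sigma> c) mod n"
    by blast
  then show ?thesis using flag_vertices_omega_edge[OF \<sigma>] by simp
qed

lemma omega_edge_swap: "{u, v} \<in> T \<Longrightarrow> omega_edge n k l v u i = - omega_edge n k l u v i"
  using omega_edge_cocycle[of u v u i] omega_edge_self by (simp add: insert_commute)

lemma tonnetz_edge_type:
  assumes "{u, v} \<in> T"
  obtains I where "I \<noteq> {}" "I \<subseteq> {..<k}" "v = (u + sum l I) mod n"
proof -
  obtain x \<sigma> where \<sigma>: "\<sigma> permutes {..<k}" and "\<forall>y\<in>{u, v}. \<exists>a<k. y = (x + flag_sum l \<sigma> a) mod n"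
    using tonnetz_face_in_flag[OF assms] by blast
  then obtain a b where ab: "a < k" "b < k" "u = (x + flag_sum l \<sigma> a) mod n"
    "v = (x + flag_sum l \<sigma> b) mod n"
    by blast
  have "(u + sum l (flag_arc k \<sigma> a b)) mod n = (u + (v - u)) mod n"
    using flag_vertices_diff_mod[OF \<sigma> ab(1,2), of x] ab(3,4) by (metis mod_add_right_eq)
  also have "\<dots> = v" using ab(4) by simp
  finally show ?thesis
    using that flag_arc_nonempty[OF ab(1,2)] flag_arc_subset[OF \<sigma> ab(2)] by metis
qed

lemma elem_red_omega_path:
  assumes "(a, b) \<in> elem_red T"
  shows "omega_path n k l a = omega_path n k l b"
proof
  fix i
  obtain xs v ys where a: "a = xs @ v # ys" and b: "b = xs @ ys" and xs: "xs \<noteq> []"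
    and v: "v = last xs \<or> (ys \<noteq> [] \<and> {last xs, v, hd ys} \<in> T)"
    using assms unfolding elem_red_def by blast
  have a_split: "omega_path n k l a i =
      omega_path n k l xs i + omega_edge n k l (last xs) v i + omega_path n k l (v # ys) i"
    using a xs omega_path_append[of xs "v # ys"] by simp
  show "omega_path n k l a i = omega_path n k l b i"
  proof (cases "ys = []")
    case True
    then show ?thesis using a_split v a b by (simp add: omega_edge_self omega_path_singleton)
  next
    case False
    have "omega_path n k l (v # ys) i = omega_edge n k l v (hd ys) i + omega_path n k l ys i"
      using False by (cases ys) (simp_all add: omega_path_Cons_Cons)
    moreover have "omega_path n k l b i =
        omega_path n k l xs i + omega_edge n k l (last xs) (hd ys) i + omega_path n k l ys i"
      using b xs False omega_path_append by simp
    moreover have "omega_edge n k l (last xs) v i + omega_edge n k l v (hd ys) i =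
        omega_edge n k l (last xs) (hd ys) i"
      using v omega_edge_cocycle omega_edge_self by (cases "v = last xs") auto
    ultimately show ?thesis using a_split by simp
  qed
qed

lemma comb_htp_omega_path: "(p, q) \<in> htp \<Longrightarrow> omega_path n k l p = omega_path n k l q"
proof (induction rule: comb_htp_induct)
  case (step y z)
  then show ?case using elem_red_omega_path[of y z] elem_red_omega_path[of z y] by auto
qed simp

lemma omega_path_rev: "edge_path T p \<Longrightarrow> omega_path n k l (rev p) i = - omega_path n k l p i"
proof (induction p)
  case (Cons a p)
  show ?case
  proof (cases "p = []")
    case False
    then have edge: "{a, hd p} \<in> T" "edge_path T p" using Cons.prems by (auto simp: edge_path_Cons)
    have "omega_path n k l (rev (a # p)) i =
        omega_path n k l (rev p) i + omega_edge n k l (hd p) a i + omega_path n k l [a] i"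
      using omega_path_append[of "rev p" "[a]"] False by (simp add: last_rev)
    also have "\<dots> = - omega_path n k l p i - omega_edge n k l a (hd p) i"
      using Cons.IH[OF edge(2)] omega_edge_swap[OF edge(1)] by (simp add: omega_path_singleton)
    also have "\<dots> = - omega_path n k l (a # p) i"
      using False by (cases p) (simp_all add: omega_path_Cons_Cons)
    finally show ?thesis .
  qed (simp add: omega_path_singleton)
qed (simp add: edge_path_def)

lemma walk_end_range: "y \<in> {0..<n} \<Longrightarrow> walk_end n l y w \<in> {0..<n}"
  by (induction w arbitrary: y) (auto simp: n_pos)

lemma walk_end_eq_mod: "y \<in> {0..<n} \<Longrightarrow> walk_end n l y w = (y + sum_list (map l w)) mod n"
proof (induction w arbitrary: y)
  case (Cons i w)
  have "(y + l i) mod n \<in> {0..<n}" using n_pos by auto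
  then show ?case using Cons by (simp add: mod_add_left_eq add.assoc)
qed simp

lemma walk_in_max_simplex:
  assumes "y \<in> {0..<n}" "distinct w" "set w \<subseteq> {..<k}"
  obtains \<sigma> where "\<sigma> permutes {..<k}" "set (walk n l y w) \<subseteq> tonn_max_simplex n k l y \<sigma>"
proof -
  obtain \<sigma> where \<sigma>: "\<sigma> permutes {..<k}" "\<forall>j<length w. \<sigma> j = w ! j"
    using permutes_extending_list[OF assms(2,3)] by blast
  have "length w \<le> k" using distinct_card[OF assms(2)] card_mono[OF _ assms(3)] by simp
  moreover have "x \<in> tonn_max_simplex n k l y \<sigma>"
    if x: "x \<in> set (walk n l y w)" and len: "length w \<le> k" for x
  proof -
    obtain t where t: "t \<le> length w" "x = walk_end n l y (take t w)"
      using walk_mem_walk_end_take[OF x] by blast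
    have "sum_list (map l (take t w)) = flag_sum l \<sigma> t"
      unfolding flag_sum_def using sum_list_map_take[OF t(1)] \<sigma>(2) t(1) by simp
    then have "x = (y + flag_sum l \<sigma> t) mod n" using t(2) walk_end_eq_mod[OF assms(1)] by simp
    then show ?thesis using flag_vertex_in_max_simplex[OF \<sigma>(1)] t(1) len by simp
  qed
  ultimately show ?thesis using that \<sigma>(1) by blast
qed

lemma walk_in_face:
  assumes "y \<in> {0..<n}" "distinct w" "set w \<subseteq> {..<k}"
  obtains S where "S \<in> T" "set (walk n l y w) \<subseteq> S"
proof -
  obtain \<sigma> where \<sigma>: "\<sigma> permutes {..<k}" "set (walk n l y w) \<subseteq> tonn_max_simplex n k l y \<sigma>"
    using walk_in_max_simplex[OF assms] by blast
  then have "tonn_max_simplex n k l y \<sigma> \<in> T"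
    using assms(1) walk_nonempty[of n l y w] by (intro subset_max_simplex_in_tonnetz) auto
  then show ?thesis using that \<sigma>(2) by blast
qed

lemma edge_path_walk: "y \<in> {0..<n} \<Longrightarrow> set w \<subseteq> {..<k} \<Longrightarrow> edge_path T (walk n l y w)"
proof (induction w arbitrary: y)
  case (Cons i w)
  let ?y' = "(y + l i) mod n"
  obtain S where S: "S \<in> T" "set (walk n l y [i]) \<subseteq> S"
    using walk_in_face[OF Cons.prems(1), of "[i]"] Cons.prems(2) by auto
  have "{y, ?y'} \<in> T" using down_closedD[OF down_closed_tonnetz S(1)] S(2) by simp
  moreover have "edge_path T (walk n l ?y' w)" using Cons n_pos by simp
  ultimately show ?case using Cons.prems(1) walk_nonempty[of n l ?y' w] hd_walk[of n l ?y' w]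
    by (simp add: edge_path_Cons singleton_in_tonnetz_iff)
qed (simp add: edge_path_singleton singleton_in_tonnetz_iff)

lemma omega_path_walk:
  "y \<in> {0..<n} \<Longrightarrow> set w \<subseteq> {..<k} \<Longrightarrow>
   omega_path n k l (walk n l y w) j = sum_list (map (\<lambda>i. avec k {i} j) w)"
proof (induction w arbitrary: y)
  case (Cons i w)
  let ?y' = "(y + l i) mod n"
  obtain rest where rest: "walk n l ?y' w = ?y' # rest"
    using hd_walk[of n l ?y' w] walk_nonempty[of n l ?y' w] by (metis list.collapse)
  have "ltype n k l y ?y' = {i}"
    using Cons.prems by (intro ltype_eqI) (auto simp: mod_diff_left_eq)
  moreover have "omega_path n k l (walk n l ?y' w) j = sum_list (map (\<lambda>i. avec k {i} j) w)"
    using Cons n_pos by simp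
  ultimately show ?case using rest omega_path_Cons_Cons[of n k l y ?y' rest j] by (simp add: omega_edge_def)
qed (simp add: omega_path_singleton)

lemma omega_path_count_word:
  "y \<in> {0..<n} \<Longrightarrow> omega_path n k l (walk n l y (count_word k c)) = count_vec k c"
  using omega_path_walk[OF _ set_count_word] sum_list_map_count_word sum_avec_singletons_eq_count_vec
  by auto

subsection \<open>Normal form of paths\<close>

lemma walk_comb_htp_in_context:
  assumes "y \<in> {0..<n}" "set u \<subseteq> {..<k}" "set w \<subseteq> {..<k}" "set v \<subseteq> {..<k}"
    "(walk n l (walk_end n l y u) w, walk n l (walk_end n l y u) w') \<in> htp"
  shows "(walk n l y (u @ w @ v), walk n l y (u @ w' @ v)) \<in> htp"
proof -
  let ?y = "walk_end n l y u"
  have "last (walk n l ?y w') = last (walk n l ?y w)"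
    using comb_htp_edge_path[OF assms(5) down_closed_tonnetz edge_path_walk] walk_end_range assms
    by simp
  then have end_eq: "walk_end n l ?y w' = walk_end n l ?y w" by (simp add: last_walk)
  have "walk n l y (u @ w @ v) =
      butlast (walk n l y u) @ walk n l ?y w @ tl (walk n l (walk_end n l ?y w) v)"
    unfolding walk_append_butlast[of n l y u "w @ v"] walk_append[of n l ?y w v] by simp
  moreover have "walk n l y (u @ w' @ v) =
      butlast (walk n l y u) @ walk n l ?y w' @ tl (walk n l (walk_end n l ?y w) v)"
    unfolding walk_append_butlast[of n l y u "w' @ v"] walk_append[of n l ?y w' v] end_eq by simp
  moreover have "edge_path T (walk n l y (u @ w @ v))"
    using edge_path_walk[OF assms(1)] assms(2-4) by simp
  ultimately show ?thesis
    using comb_htp_in_context[OF assms(5) down_closed_tonnetz] walk_nonempty by metis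
qed

text \<open>Two consecutive steps commute, as both orders run through a common simplex.\<close>

lemma walk_swap_comb_htp:
  assumes "i \<noteq> j" "i < k" "j < k" "y \<in> {0..<n}" "set u \<subseteq> {..<k}" "set v \<subseteq> {..<k}"
  shows "(walk n l y (u @ [j, i] @ v), walk n l y (u @ [i, j] @ v)) \<in> htp"
proof (rule walk_comb_htp_in_context[OF assms(4,5) _ assms(6)])
  let ?y = "walk_end n l y u"
  have y: "?y \<in> {0..<n}" using walk_end_range[OF assms(4)] .
  obtain S1 where "S1 \<in> T" "set (walk n l ?y [j, i]) \<subseteq> S1"
    using walk_in_face[OF y, of "[j, i]"] assms by auto
  moreover obtain S2 where "S2 \<in> T" "set (walk n l ?y [i, j]) \<subseteq> S2"
    using walk_in_face[OF y, of "[i, j]"] assms by auto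
  moreover have "walk_end n l ?y [j, i] = walk_end n l ?y [i, j]"
    using walk_end_eq_mod[OF y, of "[j, i]"] walk_end_eq_mod[OF y, of "[i, j]"]
    by (simp del: walk_end.simps add: add_ac)
  ultimately show "(walk n l ?y [j, i], walk n l ?y [i, j]) \<in> htp"
    by (intro face_paths_comb_htp[OF down_closed_tonnetz])
      (simp_all add: last_walk length_walk hd_walk del: walk.simps walk_end.simps)
  show "set [j, i] \<subseteq> {..<k}" using assms by auto
qed

lemma walk_move_letter_comb_htp:
  "i \<notin> set w \<Longrightarrow> i < k \<Longrightarrow> set u \<subseteq> {..<k} \<Longrightarrow> set w \<subseteq> {..<k} \<Longrightarrow> y \<in> {0..<n} \<Longrightarrow>
   (walk n l y (u @ w @ [i]), walk n l y (u @ [i] @ w)) \<in> htp"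
proof (induction w arbitrary: u)
  case (Cons j w)
  have "(walk n l y ((u @ [j]) @ w @ [i]), walk n l y ((u @ [j]) @ [i] @ w)) \<in> htp"
    using Cons.IH[of "u @ [j]"] Cons.prems by simp
  moreover have "(walk n l y (u @ [j, i] @ w), walk n l y (u @ [i, j] @ w)) \<in> htp"
    using Cons.prems by (intro walk_swap_comb_htp) auto
  ultimately show ?case by (auto intro: comb_htp_trans)
qed (simp add: comb_htp_refl)

lemma walk_count_word_snoc:
  assumes "i < k" "y \<in> {0..<n}"
  shows "(walk n l y (count_word k c @ [i]), walk n l y (count_word k (c(i := Suc (c i))))) \<in> htp"
proof -
  let ?c' = "c(i := Suc (c i))"
  define B where "B d t = replicate (d t) t" for d :: "nat \<Rightarrow> nat" and t
  define X where "X = concat (map (B c) [0..<i])"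
  define Y where "Y = concat (map (B c) [Suc i..<k])"
  have split: "[0..<k] = [0..<i] @ i # [Suc i..<k]"
    using assms(1) by (metis le_add_diff_inverse less_imp_le_nat upt_add_eq_append upt_conv_Cons zero_le)
  have word: "count_word k d = concat (map (B d) [0..<i]) @ B d i @ concat (map (B d) [Suc i..<k])" for d
    unfolding count_word_def B_def by (subst split) simp
  have maps: "map (B ?c') [0..<i] = map (B c) [0..<i]" "map (B ?c') [Suc i..<k] = map (B c) [Suc i..<k]"
    by (simp_all add: B_def)
  have "count_word k ?c' = X @ B ?c' i @ Y"
    unfolding X_def Y_def word[of ?c'] maps ..
  moreover have "count_word k c = X @ B c i @ Y"
    unfolding X_def Y_def word[of c] by simp
  ultimately have words: "count_word k c = (X @ replicate (c i) i) @ Y"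
    "count_word k ?c' = (X @ replicate (c i) i) @ [i] @ Y"
    by (simp_all add: B_def replicate_append_same)
  have "i \<notin> set Y" unfolding Y_def B_def by auto
  moreover have "set (X @ replicate (c i) i) \<subseteq> {..<k}" "set Y \<subseteq> {..<k}"
    using set_count_word[of k c] unfolding words by auto
  ultimately have "(walk n l y ((X @ replicate (c i) i) @ Y @ [i]),
      walk n l y ((X @ replicate (c i) i) @ [i] @ Y)) \<in> htp"
    by (rule walk_move_letter_comb_htp[OF _ assms(1) _ _ assms(2)])
  then show ?thesis unfolding words by simp
qed

lemma walk_count_word_append:
  "set ws \<subseteq> {..<k} \<Longrightarrow> y \<in> {0..<n} \<Longrightarrow>
   (walk n l y (count_word k c @ ws), walk n l y (count_word k (\<lambda>t. c t + count_list ws t))) \<in> htp"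
proof (induction ws arbitrary: c)
  case (Cons i ws)
  define c' where "c' = c(i := Suc (c i))"
  have "(walk n l y ([] @ (count_word k c @ [i]) @ ws), walk n l y ([] @ count_word k c' @ ws)) \<in> htp"
    using Cons.prems set_count_word[of k c] set_count_word[of k c'] walk_count_word_snoc[of i y c]
    unfolding c'_def by (intro walk_comb_htp_in_context) auto
  moreover have "(walk n l y (count_word k c' @ ws),
      walk n l y (count_word k (\<lambda>t. c' t + count_list ws t))) \<in> htp"
    using Cons.IH[of c'] Cons.prems by simp
  moreover have "(\<lambda>t. c' t + count_list ws t) = (\<lambda>t. c t + count_list (i # ws) t)"
    by (auto simp: c'_def)
  ultimately show ?case by (auto intro: comb_htp_trans)
qed (simp add: comb_htp_refl)

text \<open>One step of every type returns to the start within a single simplex.\<close>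

lemma walk_full_round_comb_htp:
  assumes "y \<in> {0..<n}" "set u \<subseteq> {..<k}"
  shows "(walk n l y (u @ [0..<k]), walk n l y u) \<in> htp"
proof -
  let ?y = "walk_end n l y u"
  have y: "?y \<in> {0..<n}" using walk_end_range[OF assms(1)] .
  have "walk_end n l ?y [0..<k] = ?y"
    using walk_end_eq_mod[OF y, of "[0..<k]"] y
    by (simp add: interv_sum_list_conv_sum_set_nat atLeast0LessThan n_eq)
  moreover obtain S where "S \<in> T" "set (walk n l ?y [0..<k]) \<subseteq> S"
    using walk_in_face[OF y, of "[0..<k]"] by (auto simp: atLeast0LessThan)
  ultimately have "(walk n l ?y [0..<k], [?y, ?y]) \<in> htp"
    using face_paths_comb_htp[OF down_closed_tonnetz, of S _ "{?y}" "[?y, ?y]"]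
      singleton_in_tonnetz_iff y two_le_k
    by (simp add: length_walk hd_walk last_walk)
  then have round: "(walk n l ?y [0..<k], [?y]) \<in> htp"
    using comb_htp_stutter[of ?y T] singleton_in_tonnetz_iff y comb_htp_trans by blast
  have split: "walk n l y (u @ [0..<k]) = butlast (walk n l y u) @ walk n l ?y [0..<k] @ []"
    by (simp add: walk_append_butlast)
  have "edge_path T (walk n l y (u @ [0..<k]))"
    using assms by (intro edge_path_walk) auto
  then have "(walk n l y (u @ [0..<k]), butlast (walk n l y u) @ [?y] @ []) \<in> htp"
    unfolding split by (intro comb_htp_in_context[OF round down_closed_tonnetz]) (simp_all add: walk_nonempty)
  moreover have "butlast (walk n l y u) @ [?y] @ [] = walk n l y u"
    using last_walk[of n l y u] walk_nonempty[of n l y u] by (metis append_butlast_last_id append_Nil2)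
  ultimately show ?thesis by simp
qed

lemma walk_count_word_add_const:
  assumes "y \<in> {0..<n}"
  shows "(walk n l y (count_word k (\<lambda>t. c t + m)), walk n l y (count_word k c)) \<in> htp"
proof (induction m)
  case (Suc m)
  have "count_word k (\<lambda>t. (c t + m) + count_list [0..<k] t) = count_word k (\<lambda>t. c t + Suc m)"
    by (rule count_word_cong) (simp add: count_list_distinct)
  then have "(walk n l y (count_word k (\<lambda>t. c t + m) @ [0..<k]), walk n l y (count_word k (\<lambda>t. c t + Suc m))) \<in> htp"
    using walk_count_word_append[OF _ assms, of "[0..<k]" "\<lambda>t. c t + m"] by (simp add: atLeast0LessThan)
  moreover have "(walk n l y (count_word k (\<lambda>t. c t + m) @ [0..<k]), walk n l y (count_word k (\<lambda>t. c t + m))) \<in> htp"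
    using walk_full_round_comb_htp[OF assms set_count_word] .
  ultimately show ?case using Suc comb_htp_sym comb_htp_trans by meson
qed (simp add: comb_htp_refl)

lemma walk_count_word_comb_htp_if_count_vec_eq:
  assumes "y \<in> {0..<n}" "count_vec k c = count_vec k d"
  shows "(walk n l y (count_word k c), walk n l y (count_word k d)) \<in> htp"
proof -
  have "0 < k" using two_le_k by simp
  then consider m where "\<forall>t<k. c t = d t + m" | m where "\<forall>t<k. d t = c t + m"
    using count_vec_eq_imp_shift assms(2) by metis
  then show ?thesis
  proof cases
    case 1
    then have "count_word k c = count_word k (\<lambda>t. d t + m)" by (intro count_word_cong) simp
    then show ?thesis using walk_count_word_add_const[OF assms(1), of d m] by simp
  next
    case 2
    then have "count_word k d = count_word k (\<lambda>t. c t + m)" by (intro count_word_cong) simp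
    then show ?thesis using walk_count_word_add_const[OF assms(1), of c m] comb_htp_sym by metis
  qed
qed

text \<open>Appending an edge of type \<open>I\<close> to a normal form is the same, up to homotopy, as appending
  the steps of \<open>I\<close> one by one (they lie in one simplex), and these can be sorted in.\<close>

lemma walk_count_word_snoc_vertex:
  assumes "y \<in> {0..<n}" and edge: "{walk_end n l y (count_word k c), v} \<in> T"
  obtains c' where "(walk n l y (count_word k c) @ [v], walk n l y (count_word k c')) \<in> htp"
proof -
  let ?u = "walk_end n l y (count_word k c)"
  let ?W = "walk n l y (count_word k c)"
  have u: "?u \<in> {0..<n}" using walk_end_range[OF assms(1)] .
  obtain I where I: "I \<noteq> {}" "I \<subseteq> {..<k}" "v = (?u + sum l I) mod n"
    using tonnetz_edge_type[OF edge] .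
  define ws where "ws = sorted_list_of_set I"
  have ws: "set ws = I" "distinct ws" "ws \<noteq> []"
    using I(1,2) finite_subset[OF I(2)] by (auto simp: ws_def)
  have "walk_end n l ?u ws = v"
    using walk_end_eq_mod[OF u, of ws] I(3) ws by (simp add: sum_list_distinct_conv_sum_set)
  moreover obtain S where "S \<in> T" "set (walk n l ?u ws) \<subseteq> S"
    using walk_in_face[OF u ws(2)] ws(1) I(2) by auto
  ultimately have edge_htp: "([?u, v], walk n l ?u ws) \<in> htp"
    using ws(3) by (intro face_paths_comb_htp[OF down_closed_tonnetz edge])
      (auto simp: length_walk hd_walk last_walk Suc_le_eq)
  have W: "?W = butlast ?W @ [?u]"
    using last_walk[of n l y "count_word k c"] walk_nonempty[of n l y "count_word k c"]
    by (metis append_butlast_last_id)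
  have "edge_path T (?W @ [v])"
    using edge_path_walk[OF assms(1) set_count_word] edge down_closedD[OF down_closed_tonnetz edge, of "{v}"]
    by (simp add: edge_path_append walk_nonempty last_walk edge_path_singleton)
  then have "(butlast ?W @ [?u, v] @ [], butlast ?W @ walk n l ?u ws @ []) \<in> htp"
    using W by (intro comb_htp_in_context[OF edge_htp down_closed_tonnetz]) (metis append_assoc append_Cons append_Nil, simp)
  then have "(?W @ [v], walk n l y (count_word k c @ ws)) \<in> htp"
    using W by (metis append.assoc append_Cons append_Nil append_Nil2 walk_append_butlast)
  then show ?thesis
    using that walk_count_word_append[OF _ assms(1), of ws c] ws(1) I(2) comb_htp_trans by blast
qed

lemma edge_path_comb_htp_count_word:
  "edge_path T p \<Longrightarrow> \<exists>c. (p, walk n l (hd p) (count_word k c)) \<in> htp"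
proof (induction p rule: rev_induct)
  case (snoc v q)
  show ?case
  proof (cases "q = []")
    case True
    then show ?thesis by (intro exI[of _ "\<lambda>_. 0"]) (simp add: count_word_zero comb_htp_refl)
  next
    case False
    have q: "edge_path T q" "{last q, v} \<in> T"
      using snoc.prems False by (simp_all add: edge_path_append)
    obtain c where c: "(q, walk n l (hd q) (count_word k c)) \<in> htp"
      using snoc.IH[OF q(1)] by blast
    have y: "hd q \<in> {0..<n}" using hd_edge_path_range[OF q(1)] .
    have "last q = walk_end n l (hd q) (count_word k c)"
      using comb_htp_edge_path[OF c down_closed_tonnetz q(1)] by (simp add: last_walk)
    then obtain c' where
      c': "(walk n l (hd q) (count_word k c) @ [v], walk n l (hd q) (count_word k c')) \<in> htp"
      using walk_count_word_snoc_vertex[OF y] q(2) by metis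
    have "(q @ [v], walk n l (hd q) (count_word k c) @ [v]) \<in> htp"
      using comb_htp_in_context[OF c down_closed_tonnetz, of "[]" "[v]"] snoc.prems False by simp
    then show ?thesis using comb_htp_trans[OF _ c'] False by auto
  qed
qed (simp add: edge_path_def)

lemma comb_htp_if_omega_path_eq:
  assumes "edge_path T p" "edge_path T q" "hd p = hd q" "omega_path n k l p = omega_path n k l q"
  shows "(p, q) \<in> htp"
proof -
  have y: "hd p \<in> {0..<n}" using hd_edge_path_range[OF assms(1)] .
  obtain c where c: "(p, walk n l (hd p) (count_word k c)) \<in> htp"
    using edge_path_comb_htp_count_word[OF assms(1)] by blast
  obtain d where d: "(q, walk n l (hd p) (count_word k d)) \<in> htp"
    using edge_path_comb_htp_count_word[OF assms(2)] assms(3) by auto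
  have "count_vec k c = count_vec k d"
    using comb_htp_omega_path[OF c] comb_htp_omega_path[OF d] omega_path_count_word[OF y] assms(4)
    by simp
  then have "(walk n l (hd p) (count_word k c), walk n l (hd p) (count_word k d)) \<in> htp"
    by (rule walk_count_word_comb_htp_if_count_vec_eq[OF y])
  then show ?thesis using c d comb_htp_sym comb_htp_trans by metis
qed

lemma omega_path_in_Lambda: "edge_path T p \<Longrightarrow> omega_path n k l p \<in> Lambda k"
  using edge_path_comb_htp_count_word comb_htp_omega_path omega_path_count_word hd_edge_path_range
    count_vec_in_Lambda
  by metis

section \<open>The universal cover and the Delone triangulation\<close>

abbreviation Omega :: "int list set \<Rightarrow> nat \<Rightarrow> int" where
  "Omega c \<equiv> omega_path n k l (SOME p. p \<in> c)"

lemma mem_htp_class_iff: "q \<in> htp_class T p \<longleftrightarrow> (p, q) \<in> htp"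
  by (simp add: htp_class_def)

lemma htp_class_eqI: "(p, q) \<in> htp \<Longrightarrow> htp_class T p = htp_class T q"
  unfolding htp_class_def using comb_htp_sym comb_htp_trans by blast

lemma Omega_htp_class: "Omega (htp_class T p) = omega_path n k l p"
proof -
  have "p \<in> htp_class T p" by (simp add: mem_htp_class_iff comb_htp_refl)
  then have "(p, SOME q. q \<in> htp_class T p) \<in> htp" by (metis someI mem_htp_class_iff)
  then show ?thesis using comb_htp_omega_path by simp
qed

lemma cover_verticesE:
  assumes "c \<in> cover_vertices T v0"
  obtains p where "edge_path T p" "hd p = v0" "c = htp_class T p"
  using assms unfolding cover_vertices_def by blast

lemma htp_class_in_cover_vertices: "edge_path T p \<Longrightarrow> hd p = v0 \<Longrightarrow> htp_class T p \<in> cover_vertices T v0"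
  unfolding cover_vertices_def by blast

lemma mem_cover_vertex:
  assumes "c \<in> cover_vertices T v0" "\<alpha> \<in> c"
  shows "edge_path T \<alpha>" "hd \<alpha> = v0" "c = htp_class T \<alpha>" "Omega c = omega_path n k l \<alpha>"
proof -
  obtain p where p: "edge_path T p" "hd p = v0" "c = htp_class T p"
    using cover_verticesE[OF assms(1)] .
  then have "(p, \<alpha>) \<in> htp" using assms(2) mem_htp_class_iff by blast
  then show "edge_path T \<alpha>" "hd \<alpha> = v0" "c = htp_class T \<alpha>" "Omega c = omega_path n k l \<alpha>"
    using comb_htp_edge_path[OF _ down_closed_tonnetz p(1)] htp_class_eqI p Omega_htp_class
      comb_htp_omega_path
    by auto
qed

lemma cover_vertex_nonempty: "c \<in> cover_vertices T v0 \<Longrightarrow> \<exists>\<alpha>. \<alpha> \<in> c"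
  by (metis cover_verticesE mem_htp_class_iff comb_htp_refl)

lemma inj_on_Omega: "inj_on Omega (cover_vertices T v0)"
proof (rule inj_onI)
  fix c1 c2
  assume c: "c1 \<in> cover_vertices T v0" "c2 \<in> cover_vertices T v0" "Omega c1 = Omega c2"
  obtain p1 where p1: "edge_path T p1" "hd p1 = v0" "c1 = htp_class T p1"
    using cover_verticesE[OF c(1)] .
  obtain p2 where p2: "edge_path T p2" "hd p2 = v0" "c2 = htp_class T p2"
    using cover_verticesE[OF c(2)] .
  have "(p1, p2) \<in> htp"
    using c(3) p1 p2 Omega_htp_class by (intro comb_htp_if_omega_path_eq) auto
  then show "c1 = c2" using p1(3) p2(3) htp_class_eqI by simp
qed

lemma Omega_image:
  assumes "v0 \<in> {0..<n}"
  shows "Omega ` cover_vertices T v0 = Lambda k"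
proof
  show "Omega ` cover_vertices T v0 \<subseteq> Lambda k"
    by (auto elim!: cover_verticesE simp: Omega_htp_class omega_path_in_Lambda)
next
  show "Lambda k \<subseteq> Omega ` cover_vertices T v0"
  proof
    fix x assume "x \<in> Lambda k"
    then obtain c where "count_vec k c = x" using count_vec_surj two_le_k by fastforce
    then have "Omega (htp_class T (walk n l v0 (count_word k c))) = x"
      using Omega_htp_class omega_path_count_word[OF assms] by simp
    moreover have "htp_class T (walk n l v0 (count_word k c)) \<in> cover_vertices T v0"
      using edge_path_walk[OF assms set_count_word] hd_walk by (intro htp_class_in_cover_vertices)
    ultimately show "x \<in> Omega ` cover_vertices T v0" by force
  qed
qed

lemma loop_null_homotopic_iff_flag:
  assumes "edge_path T \<alpha>" "edge_path T \<beta>" "hd \<alpha> = v0" "hd \<beta> = v0"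
    and \<sigma>: "x \<in> {0..<n}" "\<sigma> permutes {..<k}" "a < k" "b < k"
    and ends: "last \<alpha> = (x + flag_sum l \<sigma> a) mod n" "last \<beta> = (x + flag_sum l \<sigma> b) mod n"
  shows "(\<alpha> @ rev \<beta>, [v0]) \<in> htp \<longleftrightarrow>
    (\<lambda>i. omega_path n k l \<alpha> i - avec k (\<sigma> ` {..<a}) i) = (\<lambda>i. omega_path n k l \<beta> i - avec k (\<sigma> ` {..<b}) i)"
proof -
  have ne: "\<alpha> \<noteq> []" "\<beta> \<noteq> []" using assms(1,2) edge_path_nonempty by auto
  have "omega_path n k l (\<alpha> @ rev \<beta>) i =
      (omega_path n k l \<alpha> i - avec k (\<sigma> ` {..<a}) i) - (omega_path n k l \<beta> i - avec k (\<sigma> ` {..<b}) i)" for i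
    using omega_path_append[of \<alpha> "rev \<beta>"] ne omega_path_rev[OF assms(2), of i] ends
      flag_vertices_omega_edge[OF \<sigma>(2-4)]
    by (simp add: hd_rev)
  moreover have "{last \<alpha>, last \<beta>} \<in> T"
    using ends \<sigma> flag_vertex_in_max_simplex by (intro subset_max_simplex_in_tonnetz) auto
  then have "edge_path T (\<alpha> @ rev \<beta>)"
    using assms(1) edge_path_rev[OF assms(2)] ne by (simp add: edge_path_append hd_rev)
  moreover have "edge_path T [v0]"
    using hd_edge_path_range[OF assms(1)] assms(3) by (simp add: edge_path_singleton singleton_in_tonnetz_iff)
  ultimately show ?thesis
    using comb_htp_if_omega_path_eq[of "\<alpha> @ rev \<beta>" "[v0]"] comb_htp_omega_path[of "\<alpha> @ rev \<beta>" "[v0]"]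
      assms(3) ne
    by (auto simp: omega_path_singleton fun_eq_iff)
qed

lemma cover_face_imp_delone_face:
  assumes "S \<in> cover_faces T v0"
  shows "Omega ` S \<in> delone_faces k"
proof -
  have S: "S \<noteq> {}" "finite S" "S \<subseteq> cover_vertices T v0"
    and E: "{last \<alpha> | \<alpha>. \<alpha> \<in> \<Union>S} \<in> T"
    and loops: "\<forall>c\<in>S. \<forall>c'\<in>S. \<forall>\<alpha>\<in>c. \<forall>\<beta>\<in>c'. (\<alpha> @ rev \<beta>, [v0]) \<in> htp"
    using assms unfolding cover_faces_def by blast+
  obtain x \<sigma> where \<sigma>: "x \<in> {0..<n}" "\<sigma> permutes {..<k}"
    and flag: "\<forall>u\<in>{last \<alpha> | \<alpha>. \<alpha> \<in> \<Union>S}. \<exists>a<k. u = (x + flag_sum l \<sigma> a) mod n"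
    using tonnetz_face_in_flag[OF E] by blast
  have "\<exists>\<alpha> a. \<alpha> \<in> c \<and> a < k \<and> last \<alpha> = (x + flag_sum l \<sigma> a) mod n" if c: "c \<in> S" for c
  proof -
    obtain \<alpha> where "\<alpha> \<in> c" using cover_vertex_nonempty c S(3) by blast
    moreover from this obtain a where "a < k" "last \<alpha> = (x + flag_sum l \<sigma> a) mod n"
      using flag c by blast
    ultimately show ?thesis by blast
  qed
  then have "\<forall>c\<in>S. \<exists>r. fst r \<in> c \<and> snd r < k \<and> last (fst r) = (x + flag_sum l \<sigma> (snd r)) mod n"
    by simp
  from bchoice[OF this] obtain r where
    r: "\<forall>c\<in>S. fst (r c) \<in> c \<and> snd (r c) < k \<and> last (fst (r c)) = (x + flag_sum l \<sigma> (snd (r c))) mod n" ..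
  define rep where "rep c = fst (r c)" for c
  define pos where "pos c = snd (r c)" for c
  define seg where "seg c = \<sigma> ` {..<pos c}" for c
  have rep: "rep c \<in> c" "pos c < k" "last (rep c) = (x + flag_sum l \<sigma> (pos c)) mod n"
    "edge_path T (rep c)" "hd (rep c) = v0" "Omega c = omega_path n k l (rep c)" if "c \<in> S" for c
    using r that mem_cover_vertex[of c v0 "rep c"] S(3) unfolding rep_def pos_def by auto
  obtain c0 where c0: "c0 \<in> S" using S(1) by blast
  define z where "z i = Omega c0 i - avec k (seg c0) i" for i
  have Omega_eq: "Omega c = (\<lambda>i. z i + avec k (seg c) i)" if c: "c \<in> S" for c
  proof -
    have "(rep c @ rev (rep c0), [v0]) \<in> htp"
      using loops c c0 rep(1) by blast
    then have "(\<lambda>i. omega_path n k l (rep c) i - avec k (seg c) i) =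
        (\<lambda>i. omega_path n k l (rep c0) i - avec k (seg c0) i)"
      unfolding seg_def
      using loop_null_homotopic_iff_flag[OF rep(4)[OF c] rep(4)[OF c0] rep(5)[OF c] rep(5)[OF c0] \<sigma>
          rep(2)[OF c] rep(2)[OF c0] rep(3)[OF c] rep(3)[OF c0]]
      by blast
    then show ?thesis using rep(6)[OF c] rep(6)[OF c0] unfolding z_def by (simp add: fun_eq_iff algebra_simps)
  qed
  have "Omega c0 \<in> Lambda k"
    using omega_path_in_Lambda rep(4,6)[OF c0] by simp
  moreover have "avec k (seg c0) \<in> Lambda k"
    using rep(2)[OF c0] permutes_image[OF \<sigma>(2)] unfolding seg_def by (intro avec_in_Lambda) auto
  ultimately have z: "z \<in> Lambda k" unfolding z_def by (rule Lambda_diff)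
  have proper: "\<forall>I\<in>seg ` S. I \<subset> {..<k}"
  proof
    fix I assume "I \<in> seg ` S"
    then obtain c where c: "c \<in> S" "I = seg c" by blast
    have "card (seg c) = pos c"
      unfolding seg_def using permutes_inj_on[OF \<sigma>(2)] by (simp add: card_image inj_on_subset)
    then show "I \<subset> {..<k}"
      using rep(2)[OF c(1)] permutes_image[OF \<sigma>(2)] c(2) unfolding seg_def by auto
  qed
  have chain: "\<forall>I\<in>seg ` S. \<forall>J\<in>seg ` S. I \<subseteq> J \<or> J \<subseteq> I"
  proof (intro ballI)
    fix I J assume "I \<in> seg ` S" "J \<in> seg ` S"
    then obtain c c' where "I = seg c" "J = seg c'" by blast
    moreover have "{..<pos c} \<subseteq> {..<pos c'} \<or> {..<pos c'} \<subseteq> {..<pos c}"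
      using nat_le_linear[of "pos c" "pos c'"] by auto
    ultimately show "I \<subseteq> J \<or> J \<subseteq> I"
      unfolding seg_def using image_mono[of _ _ \<sigma>] by blast
  qed
  have "Omega ` S = (\<lambda>c. (\<lambda>i. z i + avec k (seg c) i)) ` S"
    by (rule image_cong[OF refl Omega_eq])
  then have "Omega ` S = (\<lambda>I. (\<lambda>i. z i + avec k I i)) ` (seg ` S)"
    by (simp add: image_image)
  moreover have "finite (seg ` S)" "seg ` S \<noteq> {}" using S(1,2) by auto
  ultimately show ?thesis
    unfolding delone_faces_def using z proper chain by (intro CollectI bexI[OF _ z] exI[of _ "seg ` S"]) simp
qed

lemma flag_path:
  fixes c :: "nat \<Rightarrow> nat"
  assumes "v0 \<in> {0..<n}" "\<sigma> permutes {..<k}" "t \<le> k"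
  defines "\<gamma> \<equiv> walk n l v0 (count_word k c @ map \<sigma> [0..<t])"
  shows "edge_path T \<gamma>" "hd \<gamma> = v0"
    "omega_path n k l \<gamma> = (\<lambda>i. count_vec k c i + avec k (\<sigma> ` {..<t}) i)"
    "last \<gamma> = (walk_end n l v0 (count_word k c) + flag_sum l \<sigma> t) mod n"
proof -
  have steps: "set (map \<sigma> [0..<t]) = \<sigma> ` {..<t}" "distinct (map \<sigma> [0..<t])"
    using permutes_inj_on[OF assms(2)] by (auto simp: atLeast0LessThan distinct_map inj_on_subset)
  have set: "set (count_word k c @ map \<sigma> [0..<t]) \<subseteq> {..<k}"
    using set_count_word[of k c] image_mono[of "{..<t}" "{..<k}" \<sigma>] permutes_image[OF assms(2)] assms(3)
    unfolding steps(1) set_append by auto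
  show "edge_path T \<gamma>" unfolding \<gamma>_def by (rule edge_path_walk[OF assms(1) set])
  show "hd \<gamma> = v0" unfolding \<gamma>_def by (rule hd_walk)
  have "sum_list (map (\<lambda>j. avec k {j} i) (map \<sigma> [0..<t])) = avec k (\<sigma> ` {..<t}) i" for i
    unfolding sum_list_distinct_conv_sum_set[OF steps(2)] steps(1)
    by (rule avec_eq_sum_singletons[symmetric]) simp
  then show "omega_path n k l \<gamma> = (\<lambda>i. count_vec k c i + avec k (\<sigma> ` {..<t}) i)"
    unfolding \<gamma>_def using omega_path_walk[OF assms(1) set] sum_list_map_count_word
      sum_avec_singletons_eq_count_vec
    by (simp add: fun_eq_iff)
  have "sum_list (map l (map \<sigma> [0..<t])) = flag_sum l \<sigma> t"
    unfolding flag_sum_def by (simp add: interv_sum_list_conv_sum_set_nat atLeast0LessThan comp_def)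
  then show "last \<gamma> = (walk_end n l v0 (count_word k c) + flag_sum l \<sigma> t) mod n"
    unfolding \<gamma>_def last_walk walk_end_append
    using walk_end_eq_mod[OF walk_end_range[OF assms(1)]] by simp
qed

lemma delone_face_imp_cover_face:
  assumes v0: "v0 \<in> {0..<n}" and S: "S \<subseteq> cover_vertices T v0" and D: "Omega ` S \<in> delone_faces k"
  shows "S \<in> cover_faces T v0"
proof -
  obtain z C where z: "z \<in> Lambda k" and C: "finite C" "C \<noteq> {}" "\<forall>I\<in>C. I \<subset> {..<k}"
    "\<forall>I\<in>C. \<forall>J\<in>C. I \<subseteq> J \<or> J \<subseteq> I" and image: "Omega ` S = (\<lambda>I. (\<lambda>i. z i + avec k I i)) ` C"
    using D unfolding delone_faces_def by blast
  have inj: "inj_on Omega S" using inj_on_Omega S by (rule inj_on_subset)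
  have S_ne: "S \<noteq> {}" and S_fin: "finite S"
    using image C(1,2) finite_imageD[OF _ inj] by auto
  obtain \<sigma> where \<sigma>: "\<sigma> permutes {..<k}" "\<forall>I\<in>C. \<sigma> ` {..<card I} = I"
    using chain_permutes_initial_segments[OF C(1) _ C(4)] C(3) by blast
  obtain cz where cz: "count_vec k cz = z" using count_vec_surj[OF _ z] two_le_k by auto
  define y where "y = walk_end n l v0 (count_word k cz)"
  have y: "y \<in> {0..<n}" unfolding y_def using walk_end_range[OF v0] .
  have vertex: "\<exists>t<k. \<forall>\<alpha>\<in>c. edge_path T \<alpha> \<and> hd \<alpha> = v0 \<and> last \<alpha> = (y + flag_sum l \<sigma> t) mod n \<and>
      omega_path n k l \<alpha> = (\<lambda>i. z i + avec k (\<sigma> ` {..<t}) i)" if c: "c \<in> S" for c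
  proof -
    obtain I where I: "I \<in> C" "Omega c = (\<lambda>i. z i + avec k I i)" using image c by blast
    define t where "t = card I"
    have t: "t < k" "\<sigma> ` {..<t} = I"
      using C(3) I(1) \<sigma>(2) psubset_card_mono[of "{..<k}" I] unfolding t_def by auto
    define \<gamma> where "\<gamma> = walk n l v0 (count_word k cz @ map \<sigma> [0..<t])"
    note \<gamma> = flag_path[OF v0 \<sigma>(1) less_imp_le[OF t(1)], of cz, folded \<gamma>_def y_def, unfolded cz t(2)]
    have "htp_class T \<gamma> \<in> cover_vertices T v0"
      using \<gamma> by (intro htp_class_in_cover_vertices)
    moreover have "Omega (htp_class T \<gamma>) = Omega c"
      using Omega_htp_class \<gamma> I(2) by simp
    ultimately have "c = htp_class T \<gamma>" using inj_onD[OF inj_on_Omega] c S by blast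
    have "edge_path T \<alpha> \<and> hd \<alpha> = v0 \<and> last \<alpha> = (y + flag_sum l \<sigma> t) mod n \<and>
        omega_path n k l \<alpha> = (\<lambda>i. z i + avec k (\<sigma> ` {..<t}) i)" if "\<alpha> \<in> c" for \<alpha>
    proof -
      have "(\<gamma>, \<alpha>) \<in> htp" using \<open>c = htp_class T \<gamma>\<close> that mem_htp_class_iff by blast
      then show ?thesis
        using comb_htp_edge_path[OF _ down_closed_tonnetz \<gamma>(1)] comb_htp_omega_path \<gamma> t(2) by simp
    qed
    then show ?thesis using t(1) by blast
  qed
  define E where "E = {last \<alpha> | \<alpha>. \<alpha> \<in> \<Union>S}"
  have "E \<subseteq> tonn_max_simplex n k l y \<sigma>"
  proof
    fix u assume "u \<in> E"
    then obtain \<alpha> c where "u = last \<alpha>" "\<alpha> \<in> c" "c \<in> S" unfolding E_def by blast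
    then show "u \<in> tonn_max_simplex n k l y \<sigma>"
      using vertex flag_vertex_in_max_simplex[OF \<sigma>(1)] less_imp_le by metis
  qed
  moreover obtain c \<alpha> where "c \<in> S" "\<alpha> \<in> c"
    using S_ne S cover_vertex_nonempty by blast
  then have "E \<noteq> {}" unfolding E_def by blast
  ultimately have "E \<in> T" by (rule subset_max_simplex_in_tonnetz[OF y \<sigma>(1)])
  moreover have "(\<alpha> @ rev \<beta>, [v0]) \<in> htp" if "c \<in> S" "c' \<in> S" and \<alpha>\<beta>: "\<alpha> \<in> c" "\<beta> \<in> c'" for c c' \<alpha> \<beta>
  proof -
    obtain t where t: "t < k" "edge_path T \<alpha>" "hd \<alpha> = v0" "last \<alpha> = (y + flag_sum l \<sigma> t) mod n"
      "omega_path n k l \<alpha> = (\<lambda>i. z i + avec k (\<sigma> ` {..<t}) i)"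
      using vertex[OF \<open>c \<in> S\<close>] \<alpha>\<beta>(1) by blast
    obtain t' where t': "t' < k" "edge_path T \<beta>" "hd \<beta> = v0" "last \<beta> = (y + flag_sum l \<sigma> t') mod n"
      "omega_path n k l \<beta> = (\<lambda>i. z i + avec k (\<sigma> ` {..<t'}) i)"
      using vertex[OF \<open>c' \<in> S\<close>] \<alpha>\<beta>(2) by blast
    show ?thesis
      using loop_null_homotopic_iff_flag[OF t(2) t'(2) t(3) t'(3) y \<sigma>(1) t(1) t'(1) t(4) t'(4)] t(5) t'(5)
      by simp
  qed
  ultimately show ?thesis
    unfolding cover_faces_def E_def using S_ne S_fin S by blast
qed

end

theorem proposition5p7:
  fixes k :: nat and l :: "nat \<Rightarrow> int" and n v0 :: int
  assumes "k \<ge> 2" and "\<forall>i<k. l i > 0" and "generic k l" and "reduced k l"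
    and "n = (\<Sum>i<k. l i)" and "v0 \<in> {0..<n}"
  shows "(\<forall>p q. edge_path (tonnetz n k l) p \<and> hd p = v0 \<and> (p, q) \<in> comb_htp (tonnetz n k l)
             \<longrightarrow> omega_path n k l p = omega_path n k l q)
    \<and> (let \<Omega> = (\<lambda>c. omega_path n k l (SOME p. p \<in> c)) in
         bij_betw \<Omega> (cover_vertices (tonnetz n k l) v0) (Lambda k) \<and>
         (\<forall>S \<subseteq> cover_vertices (tonnetz n k l) v0.
             S \<in> cover_faces (tonnetz n k l) v0 \<longleftrightarrow> \<Omega> ` S \<in> delone_faces k))"
proof -
  interpret tonnetz_setting k l n
    using assms by unfold_locales auto
  show ?thesis
    unfolding Let_def bij_betw_def
    using comb_htp_omega_path inj_on_Omega Omega_image[OF assms(6)]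
      cover_face_imp_delone_face delone_face_imp_cover_face[OF assms(6)]
    by blast
qed

end
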